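(* Consider a qubit chain with sites indexed by $\mathbb{Z}$ and the Floquet unitary $U=\prod_{i\ \mathrm{odd}}C_{i,i+1}\prod_{i\ \mathrm{even}}C_{i,i+1}$, where each $C_{i,i+1}$ is a two-qubit Clifford gate on sites $(i,i+1)$ that is not in the product class. Let $k\ge1$, $a\in\mathbb{Z}$, and suppose $U$ has an irreducible left $k$-wall around $C=\{a+1,\dots,a+k\}$. Then every gate interior to the wall, i.e. every $C_{i,i+1}$ with $a+1\le i\le a+k-1$, belongs to the $\mathrm{SWAP}$-class or the $\mathrm{FSWAP}$-class.
   Context: Two-qubit Clifford gates fall into four classes under $C\mapsto(a_1\otimes a_2)C(a_3\otimes a_4)$ with $a_i$ single-qubit Cliffords (up to global phase): the product class (gates of the form $a\otimes b$), the $\mathrm{CZ}$-class $\{(a_1\otimes a_2)\,\mathrm{CZ}\,(a_3\otimes a_4)\}$ with $\mathrm{CZ}=\mathrm{diag}(1,1,1,-1)$, the $\mathrm{SWAP}$-class $\{(a_1\otimes a_2)\,\mathrm{SWAP}\,(a_3\otimes a_4)\}$, and the $\mathrm{FSWAP}$-class $\{(a_1\otimes a_2)\,\mathrm{CZ}\cdot\mathrm{SWAP}\,(a_3\otimes a_4)\}$. For integers $b\le c$, set $L_b=\{i\le b\}$, $C_{b,c}=\{b+1,\dots,c\}$ (empty if $b=c$), $R_c=\{i>c\}$. $U$ satisfies the left wall condition for $(b,c)$ if for every finitely supported Pauli string $P$ supported in $L_b$ and every integer $t\ge1$, $U^tPU^{-t}$ acts as the identity on every site of $R_c$. $U$ has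 an irreducible left $k$-wall around $\{a+1,\dots,a+k\}$ if it satisfies the left wall condition for $(a,a+k)$ but not for any $(b,c)$ with $a\le b\le c\le a+k$ and $(b,c)\ne(a,a+k)$. *)

theory Defs
  imports "Jordan_Normal_Form.Schur_Decomposition"
begin

datatype pauli = PI | PX | PY | PZ

definition pmat :: "pauli \<Rightarrow> complex mat" where
  "pmat p = (case p of
      PI \<Rightarrow> mat_of_rows_list 2 [[1, 0], [0, 1]]
    | PX \<Rightarrow> mat_of_rows_list 2 [[0, 1], [1, 0]]
    | PY \<Rightarrow> mat_of_rows_list 2 [[0, -\<i>], [\<i>, 0]]
    | PZ \<Rightarrow> mat_of_rows_list 2 [[1, 0], [0, -1]])"

text \<open>Kronecker product of two 2x2 matrices (first factor = site i, second = site i+1).\<close>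
definition kron2 :: "complex mat \<Rightarrow> complex mat \<Rightarrow> complex mat" where
  "kron2 A B = mat 4 4 (\<lambda>(r, s). A $$ (r div 2, s div 2) * B $$ (r mod 2, s mod 2))"

definition unitary_mat :: "nat \<Rightarrow> complex mat \<Rightarrow> bool" where
  "unitary_mat n U \<longleftrightarrow> U \<in> carrier_mat n n \<and> U * mat_adjoint U = 1\<^sub>m n"

definition clifford1 :: "complex mat \<Rightarrow> bool" where
  "clifford1 A \<longleftrightarrow> unitary_mat 2 A \<and>
     (\<forall>p. \<exists>q c. A * pmat p * mat_adjoint A = c \<cdot>\<^sub>m pmat q)"

definition clifford2 :: "complex mat \<Rightarrow> bool" where
  "clifford2 G \<longleftrightarrow> unitary_mat 4 G \<and>
     (\<forall>p q. \<exists>p' q' c. G * kron2 (pmat p) (pmat q) * mat_adjoint G = c \<cdot>\<^sub>m kron2 (pmat p') (pmat q'))"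

definition CZ :: "complex mat" where
  "CZ = mat_of_rows_list 4 [[1,0,0,0],[0,1,0,0],[0,0,1,0],[0,0,0,-1]]"

definition SWAP :: "complex mat" where
  "SWAP = mat_of_rows_list 4 [[1,0,0,0],[0,0,1,0],[0,1,0,0],[0,0,0,1]]"

text \<open>Classes under local single-qubit Clifford dressing. A global phase can be
  absorbed into the (phase-closed) single-qubit Clifford factors.\<close>
definition product_class :: "complex mat \<Rightarrow> bool" where
  "product_class G \<longleftrightarrow> (\<exists>a b. clifford1 a \<and> clifford1 b \<and> G = kron2 a b)"

definition dressed_class :: "complex mat \<Rightarrow> complex mat \<Rightarrow> bool" where
  "dressed_class M G \<longleftrightarrow> (\<exists>a1 a2 a3 a4. clifford1 a1 \<and> clifford1 a2 \<and> clifford1 a3 \<and> clifford1 a4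
      \<and> G = kron2 a1 a2 * M * kron2 a3 a4)"

definition CZ_class :: "complex mat \<Rightarrow> bool" where "CZ_class = dressed_class CZ"
definition SWAP_class :: "complex mat \<Rightarrow> bool" where "SWAP_class = dressed_class SWAP"
definition FSWAP_class :: "complex mat \<Rightarrow> bool" where "FSWAP_class = dressed_class (CZ * SWAP)"

definition gate_img :: "complex mat \<Rightarrow> pauli \<times> pauli \<Rightarrow> pauli \<times> pauli" where
  "gate_img G pq = (SOME pq'. \<exists>c. G * kron2 (pmat (fst pq)) (pmat (snd pq)) * mat_adjoint G
                                 = c \<cdot>\<^sub>m kron2 (pmat (fst pq')) (pmat (snd pq')))"

definition layer :: "(int \<Rightarrow> complex mat) \<Rightarrow> int \<Rightarrow> (int \<Rightarrow> pauli) \<Rightarrow> (int \<Rightarrow> pauli)" where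
  "layer C par P = (\<lambda>j. if (j - par) mod 2 = 0
        then fst (gate_img (C j) (P j, P (j + 1)))
        else snd (gate_img (C (j - 1)) (P (j - 1), P j)))"

text \<open>P \<mapsto> U P U^{-1} for U = (prod_{i odd} C_{i,i+1}) (prod_{i even} C_{i,i+1}):
  first the even layer, then the odd layer.\<close>
definition U_act :: "(int \<Rightarrow> complex mat) \<Rightarrow> (int \<Rightarrow> pauli) \<Rightarrow> (int \<Rightarrow> pauli)" where
  "U_act C P = layer C 1 (layer C 0 P)"

definition left_wall :: "(int \<Rightarrow> complex mat) \<Rightarrow> int \<Rightarrow> int \<Rightarrow> bool" where
  "left_wall C b c \<longleftrightarrow>
     (\<forall>P. finite {j. P j \<noteq> PI} \<longrightarrow> (\<forall>j. P j \<noteq> PI \<longrightarrow> j \<le> b) \<longrightarrow>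
        (\<forall>t::nat. t \<ge> 1 \<longrightarrow> (\<forall>j. j > c \<longrightarrow> ((U_act C ^^ t) P) j = PI)))"

definition irreducible_left_wall :: "(int \<Rightarrow> complex mat) \<Rightarrow> nat \<Rightarrow> int \<Rightarrow> bool" where
  "irreducible_left_wall C k a \<longleftrightarrow> left_wall C a (a + int k) \<and>
     (\<forall>b c. a \<le> b \<longrightarrow> b \<le> c \<longrightarrow> c \<le> a + int k \<longrightarrow> (b, c) \<noteq> (a, a + int k) \<longrightarrow> \<not> left_wall C b c)"

end

theory Submission
  imports Defs
begin

text \<open>For a two-qubit Clifford gate $G$, let $\tau_G(a)$ be the right-hand component of
  $G (a \otimes I) G^\dagger$; $\tau_G$ is a linear map $\mathbb{F}_2^2 \to \mathbb{F}_2^2$.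

  If $\tau_G$ has rank two, then $G$ moves the whole left Pauli algebra to the right site, and
  comparing with $\mathrm{SWAP}$ resp.\ $\mathrm{CZ} \cdot \mathrm{SWAP}$ dressed by suitable local
  Cliffords shows that $G$ lies in one of these two classes: a unitary agreeing with $G$ on the four
  local Paulis, up to phases, differs from $G$ by a Pauli.

  If $\tau_{C_{i,i+1}}$ has rank at most one, the only Pauli that can cross the bond $(i, i+1)$ in
  one step is a fixed $Q$, and the part of $U P U^{-1}$ to the right of $i$ depends only on whether
  $Q$ crosses. Hence a left wall for $(a, c)$ with $a \le i \le c$ either already holds for $(a, i)$,
  or a single leaking string $w$ lets every evolved string from the left of $i$ be written as a
  string left of $i$ times a string that stays left of $c$ forever; then the wall holds for $(i, c)$.
  For an interior gate of an irreducible wall both alternatives are excluded, so its $\tau$ has rank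
  two.\<close>

lemma sum_upt_2: "sum f {0..<2::nat} = f 0 + f 1"
  by (simp add: eval_nat_numeral atLeast0LessThan lessThan_Suc add_ac)

lemma sum_upt_4: "sum f {0..<4::nat} = f 0 + f 1 + f 2 + f 3"
  by (simp add: eval_nat_numeral atLeast0LessThan lessThan_Suc add_ac)

lemma less_2_iff: "(r::nat) < 2 \<longleftrightarrow> r = 0 \<or> r = 1"
  by auto

lemma less_4_iff: "(r::nat) < 4 \<longleftrightarrow> r = 0 \<or> r = 1 \<or> r = 2 \<or> r = 3"
  by auto

lemma all_less_4_iff: "(\<forall>r<4. P r) \<longleftrightarrow> P 0 \<and> P 1 \<and> P 2 \<and> P (3::nat)"
  by (auto simp: less_4_iff)

lemma eq_mat2I:
  assumes "A \<in> carrier_mat 2 2" "B \<in> carrier_mat 2 2"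
    and "A $$ (0,0) = B $$ (0,0)" "A $$ (0,1) = B $$ (0,1)" "A $$ (1,0) = B $$ (1,0)" "A $$ (1,1) = B $$ (1,1)"
  shows "A = B"
  by (rule eq_matI) (use assms in \<open>auto simp: less_2_iff\<close>)

lemma index_mult_mat2:
  assumes "A \<in> carrier_mat 2 2" "B \<in> carrier_mat 2 2" "i < 2" "j < 2"
  shows "(A * B) $$ (i,j) = A $$ (i,0) * B $$ (0,j) + A $$ (i,1) * B $$ (1,j)"
  using assms by (simp add: scalar_prod_def sum_upt_2)

lemma mult_carrier_mat2[simp]: "A \<in> carrier_mat 2 2 \<Longrightarrow> B \<in> carrier_mat 2 2 \<Longrightarrow> A * B \<in> carrier_mat 2 2"
  by (rule mult_carrier_mat)

lemma mult_carrier_mat4[simp]: "A \<in> carrier_mat 4 4 \<Longrightarrow> B \<in> carrier_mat 4 4 \<Longrightarrow> A * B \<in> carrier_mat 4 4"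
  by (rule mult_carrier_mat)

lemma smult_smult_mat[simp]: "a \<cdot>\<^sub>m (b \<cdot>\<^sub>m (A::complex mat)) = (a * b) \<cdot>\<^sub>m A"
  by (rule eq_matI) auto

lemma one_smult_mat[simp]: "1 \<cdot>\<^sub>m (A::complex mat) = A"
  by (rule eq_matI) auto

lemma zero_smult_mat: "0 \<cdot>\<^sub>m (A::complex mat) = 0\<^sub>m (dim_row A) (dim_col A)"
  by (rule eq_matI) auto

lemma smult_one_mat_inject: "(a \<cdot>\<^sub>m 1\<^sub>m n = (b \<cdot>\<^sub>m 1\<^sub>m n :: complex mat)) \<Longrightarrow> 0 < n \<Longrightarrow> a = b"
proof -
  assume "a \<cdot>\<^sub>m 1\<^sub>m n = b \<cdot>\<^sub>m 1\<^sub>m n" "0 < n"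
  then have "(a \<cdot>\<^sub>m 1\<^sub>m n) $$ (0,0) = (b \<cdot>\<^sub>m 1\<^sub>m n :: complex mat) $$ (0,0)" by simp
  with \<open>0 < n\<close> show "a = b" by simp
qed

lemma dim_mat_adjoint[simp]:
  "dim_row (mat_adjoint A) = dim_col A" "dim_col (mat_adjoint A) = dim_row A"
  by (simp_all add: mat_adjoint_def mat_of_rows_def)

lemma index_mat_adjoint[simp]:
  "i < dim_col A \<Longrightarrow> j < dim_row A \<Longrightarrow> mat_adjoint A $$ (i,j) = cnj (A $$ (j,i))"
  by (simp add: mat_adjoint_def mat_of_rows_def)

lemma mat_adjoint_carrier[simp]: "A \<in> carrier_mat n m \<Longrightarrow> mat_adjoint A \<in> carrier_mat m n"
  unfolding carrier_mat_def by simp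

lemma mat_adjoint_mult:
  assumes "(A::complex mat) \<in> carrier_mat n m" "B \<in> carrier_mat m l"
  shows "mat_adjoint (A * B) = mat_adjoint B * mat_adjoint A"
proof (rule eq_matI)
  fix i j assume "i < dim_row (mat_adjoint B * mat_adjoint A)" "j < dim_col (mat_adjoint B * mat_adjoint A)"
  then show "mat_adjoint (A * B) $$ (i, j) = (mat_adjoint B * mat_adjoint A) $$ (i, j)"
    using assms by (simp add: scalar_prod_def cnj_sum mult.commute)
qed (use assms in auto)

lemma mat_adjoint_mat_adjoint[simp]: "mat_adjoint (mat_adjoint (A::complex mat)) = A"
  by (rule eq_matI) auto

lemma mat_adjoint_smult: "mat_adjoint (c \<cdot>\<^sub>m (A::complex mat)) = cnj c \<cdot>\<^sub>m mat_adjoint A"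
  by (rule eq_matI) auto

lemma mat_adjoint_one[simp]: "mat_adjoint (1\<^sub>m n :: complex mat) = 1\<^sub>m n"
  by (rule eq_matI) auto

lemma unitary_matD:
  assumes "unitary_mat n U"
  shows "U \<in> carrier_mat n n" "U * mat_adjoint U = 1\<^sub>m n" "mat_adjoint U * U = 1\<^sub>m n"
proof -
  show U: "U \<in> carrier_mat n n" "U * mat_adjoint U = 1\<^sub>m n"
    using assms unfolding unitary_mat_def by auto
  show "mat_adjoint U * U = 1\<^sub>m n"
    by (rule mat_mult_left_right_inverse[OF U(1) mat_adjoint_carrier[OF U(1)] U(2)])
qed

lemma unitary_cancel_left:
  assumes "unitary_mat n U" "X \<in> carrier_mat n k"
  shows "mat_adjoint U * (U * X) = X"
proof -
  note U = unitary_matD[OF assms(1)]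
  have "mat_adjoint U * (U * X) = (mat_adjoint U * U) * X"
    by (rule assoc_mult_mat[OF mat_adjoint_carrier[OF U(1)] U(1) assms(2), symmetric])
  then show ?thesis using U(3) assms(2) by simp
qed

lemma unitary_cancel_left':
  assumes "unitary_mat n U" "X \<in> carrier_mat n k"
  shows "U * (mat_adjoint U * X) = X"
proof -
  note U = unitary_matD[OF assms(1)]
  have "U * (mat_adjoint U * X) = (U * mat_adjoint U) * X"
    by (rule assoc_mult_mat[OF U(1) mat_adjoint_carrier[OF U(1)] assms(2), symmetric])
  then show ?thesis using U(2) assms(2) by simp
qed

lemma unitary_mat_mult:
  assumes "unitary_mat n A" "unitary_mat n B"
  shows "unitary_mat n (A * B)"
proof -
  note A = unitary_matD[OF assms(1)] and B = unitary_matD[OF assms(2)]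
  have "(A * B) * mat_adjoint (A * B) = A * (B * (mat_adjoint B * mat_adjoint A))"
    using assoc_mult_mat[OF A(1) B(1) mult_carrier_mat[OF mat_adjoint_carrier mat_adjoint_carrier]] A B
    by (simp add: mat_adjoint_mult[of _ n n _ n])
  also have "\<dots> = 1\<^sub>m n"
    using A B by (simp add: unitary_cancel_left'[OF assms(2), of _ n])
  finally show ?thesis unfolding unitary_mat_def using A B by auto
qed

lemma unitary_mat_adjoint: "unitary_mat n U \<Longrightarrow> unitary_mat n (mat_adjoint U)"
  using unitary_matD[of n U] unfolding unitary_mat_def by simp

lemma unitary_conj_mult:
  assumes "unitary_mat n G" "A \<in> carrier_mat n n" "B \<in> carrier_mat n n"
  shows "G * (A * B) * mat_adjoint G = (G * A * mat_adjoint G) * (G * B * mat_adjoint G)"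
proof -
  note U = unitary_matD[OF assms(1)]
  have "(G * A * mat_adjoint G) * (G * B * mat_adjoint G)
      = G * (A * (mat_adjoint G * (G * (B * mat_adjoint G))))"
    using U assms by (simp add: assoc_mult_mat[of _ n n _ n _ n])
  also have "\<dots> = G * (A * B) * mat_adjoint G"
    using U assms
    by (simp add: unitary_cancel_left[OF assms(1), of "B * mat_adjoint G" n] assoc_mult_mat[of _ n n _ n _ n])
  finally show ?thesis by simp
qed

lemma conj_smult:
  assumes "G \<in> carrier_mat n n" "A \<in> carrier_mat n n"
  shows "G * (c \<cdot>\<^sub>m A) * mat_adjoint G = c \<cdot>\<^sub>m (G * A * mat_adjoint G)"
  using assms by (simp add: mult_smult_distrib[of _ n n _ n] mult_smult_assoc_mat[of _ n n _ n])

lemma unitary_conj_cancel: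
  assumes "unitary_mat n G" "M \<in> carrier_mat n n"
  shows "mat_adjoint G * (G * M * mat_adjoint G) * G = M"
proof -
  note U = unitary_matD[OF assms(1)]
  have "mat_adjoint G * (G * M * mat_adjoint G) * G = mat_adjoint G * (G * (M * (mat_adjoint G * G)))"
    using U assms(2) by (simp add: assoc_mult_mat[of _ n n _ n _ n])
  then show ?thesis using U assms(2) by (simp add: unitary_cancel_left[OF assms(1), of M n])
qed

lemma unitary_conj_eq_zero:
  assumes "unitary_mat n G" "M \<in> carrier_mat n n" "G * M * mat_adjoint G = 0\<^sub>m n n"
  shows "M = 0\<^sub>m n n"
  using unitary_conj_cancel[OF assms(1,2)] assms(3) unitary_matD[OF assms(1)] by simp

lemma kron2_carrier[simp]: "kron2 A B \<in> carrier_mat 4 4"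
  by (simp add: kron2_def)

lemma dim_kron2[simp]: "dim_row (kron2 A B) = 4" "dim_col (kron2 A B) = 4"
  by (simp_all add: kron2_def)

lemma index_kron2:
  "r < 4 \<Longrightarrow> s < 4 \<Longrightarrow> kron2 A B $$ (r,s) = A $$ (r div 2, s div 2) * B $$ (r mod 2, s mod 2)"
  by (simp add: kron2_def)

lemma kron2_mult:
  assumes "A \<in> carrier_mat 2 2" "B \<in> carrier_mat 2 2" "C \<in> carrier_mat 2 2" "D \<in> carrier_mat 2 2"
  shows "kron2 A B * kron2 C D = kron2 (A * C) (B * D)"
proof (rule eq_matI)
  fix r s assume "r < dim_row (kron2 (A * C) (B * D))" "s < dim_col (kron2 (A * C) (B * D))"
  then have r: "r < 4" and s: "s < 4" by auto
  have "(kron2 A B * kron2 C D) $$ (r, s) = (\<Sum>t<4. (A $$ (r div 2, t div 2) * B $$ (r mod 2, t mod 2))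
                                                  * (C $$ (t div 2, s div 2) * D $$ (t mod 2, s mod 2)))"
    using r s by (simp add: kron2_def scalar_prod_def lessThan_atLeast0)
  also have "\<dots> = (A $$ (r div 2, 0) * C $$ (0, s div 2) + A $$ (r div 2, 1) * C $$ (1, s div 2))
                * (B $$ (r mod 2, 0) * D $$ (0, s mod 2) + B $$ (r mod 2, 1) * D $$ (1, s mod 2))"
    by (simp add: lessThan_atLeast0 sum_upt_4 ring_distribs mult_ac)
  also have "\<dots> = kron2 (A * C) (B * D) $$ (r, s)"
    using r s assms by (simp add: index_kron2 scalar_prod_def sum_upt_2)
  finally show "(kron2 A B * kron2 C D) $$ (r, s) = kron2 (A * C) (B * D) $$ (r, s)" .
qed auto

lemma mat_adjoint_kron2:
  assumes "A \<in> carrier_mat 2 2" "B \<in> carrier_mat 2 2"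
  shows "mat_adjoint (kron2 A B) = kron2 (mat_adjoint A) (mat_adjoint B)"
  by (rule eq_matI) (use assms in \<open>auto simp: index_kron2\<close>)

lemma kron2_smult_left: "A \<in> carrier_mat 2 2 \<Longrightarrow> kron2 (c \<cdot>\<^sub>m A) B = c \<cdot>\<^sub>m kron2 A B"
  by (rule eq_matI) (auto simp: index_kron2)

lemma kron2_smult_right: "B \<in> carrier_mat 2 2 \<Longrightarrow> kron2 A (c \<cdot>\<^sub>m B) = c \<cdot>\<^sub>m kron2 A B"
  by (rule eq_matI) (auto simp: index_kron2)

lemma kron2_one: "kron2 (1\<^sub>m 2) (1\<^sub>m 2) = 1\<^sub>m 4"
proof (rule eq_matI)
  fix r s assume "r < dim_row (1\<^sub>m 4 :: complex mat)" "s < dim_col (1\<^sub>m 4 :: complex mat)"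
  then have r: "r < 4" and s: "s < 4" by auto
  have "(r div 2 = s div 2 \<and> r mod 2 = s mod 2) = (r = s)"
    by (metis div_mult_mod_eq)
  then show "kron2 (1\<^sub>m 2) (1\<^sub>m 2) $$ (r, s) = (1\<^sub>m 4 :: complex mat) $$ (r, s)"
    using r s by (auto simp: index_kron2)
qed auto

fun pmul :: "pauli \<Rightarrow> pauli \<Rightarrow> pauli" where
  "pmul PI q = q" | "pmul p PI = p"
| "pmul PX PX = PI" | "pmul PX PY = PZ" | "pmul PX PZ = PY"
| "pmul PY PX = PZ" | "pmul PY PY = PI" | "pmul PY PZ = PX"
| "pmul PZ PX = PY" | "pmul PZ PY = PX" | "pmul PZ PZ = PI"

fun pphase :: "pauli \<Rightarrow> pauli \<Rightarrow> complex" where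
  "pphase PX PY = \<i>" | "pphase PY PZ = \<i>" | "pphase PZ PX = \<i>"
| "pphase PY PX = - \<i>" | "pphase PZ PY = - \<i>" | "pphase PX PZ = - \<i>" | "pphase _ _ = 1"

definition pcommute :: "pauli \<Rightarrow> pauli \<Rightarrow> bool" where
  "pcommute p q \<longleftrightarrow> p = PI \<or> q = PI \<or> p = q"

lemma pmul_assoc: "pmul (pmul p q) r = pmul p (pmul q r)"
  by (cases p; cases q; cases r; simp)

lemma pmul_self[simp]: "pmul p p = PI"
  by (cases p; simp)

lemma pmul_PI_right[simp]: "pmul p PI = p"
  by (cases p; simp)

lemma pmul_eq_PI_iff: "pmul p q = PI \<longleftrightarrow> p = q"
  by (cases p; cases q; simp)

lemma pmul_eq_left_iff: "pmul s t = s \<longleftrightarrow> t = PI"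
  by (cases s; cases t; simp)

lemma pmul_eq_right_iff: "pmul s t = t \<longleftrightarrow> s = PI"
  by (cases s; cases t; simp)

lemma pmul_cancel_left: "pmul p (pmul p q) = q"
  by (cases p; cases q; simp)

lemma pmul_cancel_right: "pmul (pmul p q) q = p" "pmul (pmul p q) p = q" "pmul q (pmul p q) = p"
  by (cases p; cases q; simp)+

lemma pphase_self[simp]: "pphase p p = 1"
  by (cases p) simp_all

lemma pphase_nonzero[simp]: "pphase p q \<noteq> 0"
  by (cases p; cases q; simp)

lemma pcommute_sym: "pcommute p q = pcommute q p"
  unfolding pcommute_def by auto

lemma UNIV_pauli: "(UNIV :: pauli set) = {PI, PX, PY, PZ}"
  using pauli.exhaust by auto

instance pauli :: finite
  by standard (simp add: UNIV_pauli)

definition pauli_entry :: "pauli \<Rightarrow> nat \<Rightarrow> nat \<Rightarrow> complex" where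
  "pauli_entry p i j = (case p of
      PI \<Rightarrow> (if i = j then 1 else 0)
    | PX \<Rightarrow> (if i = j then 0 else 1)
    | PY \<Rightarrow> (if i = j then 0 else if i = 0 then - \<i> else \<i>)
    | PZ \<Rightarrow> (if i = j then (if i = 0 then 1 else -1) else 0))"

lemma dim_pmat[simp]: "dim_row (pmat p) = 2" "dim_col (pmat p) = 2"
  unfolding pmat_def mat_of_rows_list_def by (cases p; simp)+

lemma pmat_carrier[simp]: "pmat p \<in> carrier_mat 2 2"
  unfolding carrier_mat_def by simp

lemma index_pmat: "i < 2 \<Longrightarrow> j < 2 \<Longrightarrow> pmat p $$ (i,j) = pauli_entry p i j"
  unfolding pmat_def mat_of_rows_list_def pauli_entry_def less_2_iff by (cases p) auto

lemma pmat_mult: "pmat p * pmat q = pphase p q \<cdot>\<^sub>m pmat (pmul p q)"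
  by (rule eq_mat2I) (simp_all add: index_mult_mat2 index_pmat del: index_mult_mat,
                      (cases p; cases q; simp add: pauli_entry_def)+)

lemma mat_adjoint_pmat[simp]: "mat_adjoint (pmat p) = pmat p"
  by (rule eq_mat2I) (simp_all add: index_pmat, (cases p; simp add: pauli_entry_def)+)

lemma pmat_PI: "pmat PI = 1\<^sub>m 2"
  by (rule eq_mat2I) (simp_all add: index_pmat pauli_entry_def)

lemma pmat_mult_self[simp]: "pmat p * pmat p = 1\<^sub>m 2"
  by (simp add: pmat_mult pmat_PI)

lemma pmat_commute: "pmat p * pmat q = (if pcommute p q then 1 else -1) \<cdot>\<^sub>m (pmat q * pmat p)"
  by (cases p; cases q; simp add: pmat_mult pcommute_def)

lemma smult_pmat_inject:
  assumes "c \<noteq> 0" "c \<cdot>\<^sub>m pmat p = d \<cdot>\<^sub>m pmat q"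
  shows "p = q"
proof -
  have e: "c * pauli_entry p i j = d * pauli_entry q i j" if "i < 2" "j < 2" for i j
    using arg_cong[OF assms(2), of "\<lambda>M. M $$ (i,j)"] that by (simp add: index_pmat)
  show ?thesis using e[of 0 0] e[of 0 1] e[of 1 0] e[of 1 1] assms(1)
    by (cases p; cases q; simp add: pauli_entry_def)
qed

lemma smult_pmat_nonzero: "c \<noteq> 0 \<Longrightarrow> c \<cdot>\<^sub>m pmat p \<noteq> 0\<^sub>m 2 2"
proof
  assume "c \<noteq> 0" "c \<cdot>\<^sub>m pmat p = 0\<^sub>m 2 2"
  have "(c \<cdot>\<^sub>m pmat p) * pmat p = c \<cdot>\<^sub>m 1\<^sub>m 2"
    by (simp add: mult_smult_assoc_mat[of _ 2 2 _ 2])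
  with \<open>c \<cdot>\<^sub>m pmat p = 0\<^sub>m 2 2\<close> have "c \<cdot>\<^sub>m 1\<^sub>m 2 = (0 \<cdot>\<^sub>m 1\<^sub>m 2 :: complex mat)"
    by (simp add: zero_smult_mat)
  with \<open>c \<noteq> 0\<close> show False using smult_one_mat_inject by fastforce
qed

definition pmat2 :: "pauli \<times> pauli \<Rightarrow> complex mat" where
  "pmat2 x = kron2 (pmat (fst x)) (pmat (snd x))"

definition pmul2 :: "pauli \<times> pauli \<Rightarrow> pauli \<times> pauli \<Rightarrow> pauli \<times> pauli" where
  "pmul2 x y = (pmul (fst x) (fst y), pmul (snd x) (snd y))"

definition pphase2 :: "pauli \<times> pauli \<Rightarrow> pauli \<times> pauli \<Rightarrow> complex" where
  "pphase2 x y = pphase (fst x) (fst y) * pphase (snd x) (snd y)"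

definition pcommute2 :: "pauli \<times> pauli \<Rightarrow> pauli \<times> pauli \<Rightarrow> bool" where
  "pcommute2 x y \<longleftrightarrow> (pcommute (fst x) (fst y) \<longleftrightarrow> pcommute (snd x) (snd y))"

definition comm_sign :: "pauli \<times> pauli \<Rightarrow> pauli \<times> pauli \<Rightarrow> complex" where
  "comm_sign x y = (if pcommute2 x y then 1 else -1)"

lemma pmat2_carrier[simp]: "pmat2 x \<in> carrier_mat 4 4"
  by (simp add: pmat2_def)

lemma dim_pmat2[simp]: "dim_row (pmat2 x) = 4" "dim_col (pmat2 x) = 4"
  by (simp_all add: pmat2_def)

lemma index_pmat2:
  "r < 4 \<Longrightarrow> s < 4 \<Longrightarrow>
   pmat2 x $$ (r,s) = pauli_entry (fst x) (r div 2) (s div 2) * pauli_entry (snd x) (r mod 2) (s mod 2)"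
  by (simp add: pmat2_def index_kron2 index_pmat)

lemma pphase2_nonzero[simp]: "pphase2 x y \<noteq> 0"
  by (simp add: pphase2_def)

lemma comm_sign_sym: "comm_sign x y = comm_sign y x"
  unfolding comm_sign_def pcommute2_def by (simp add: pcommute_sym)

lemma pmat2_mult: "pmat2 x * pmat2 y = pphase2 x y \<cdot>\<^sub>m pmat2 (pmul2 x y)"
  by (simp add: pmat2_def kron2_mult pmat_mult kron2_smult_left kron2_smult_right pphase2_def
      pmul2_def mult.commute)

lemma mat_adjoint_pmat2[simp]: "mat_adjoint (pmat2 x) = pmat2 x"
  by (simp add: pmat2_def mat_adjoint_kron2)

lemma pmat2_mult_self[simp]: "pmat2 x * pmat2 x = 1\<^sub>m 4"
  by (simp add: pmat2_def kron2_mult kron2_one)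

lemma pmat2_PI: "pmat2 (PI, PI) = 1\<^sub>m 4"
  by (simp add: pmat2_def pmat_PI kron2_one)

lemma pmul2_self[simp]: "pmul2 x x = (PI, PI)"
  by (simp add: pmul2_def)

lemma pmul2_eq_PI_iff: "pmul2 x y = (PI, PI) \<longleftrightarrow> x = y"
  by (cases x; cases y) (simp add: pmul2_def pmul_eq_PI_iff)

lemma pmat2_commute: "pmat2 x * pmat2 y = comm_sign x y \<cdot>\<^sub>m (pmat2 y * pmat2 x)"
proof -
  have "pmat2 x * pmat2 y = kron2 (pmat (fst x) * pmat (fst y)) (pmat (snd x) * pmat (snd y))"
    by (simp add: pmat2_def kron2_mult)
  also have "\<dots> = kron2 ((if pcommute (fst x) (fst y) then 1 else -1) \<cdot>\<^sub>m (pmat (fst y) * pmat (fst x)))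
                       ((if pcommute (snd x) (snd y) then 1 else -1) \<cdot>\<^sub>m (pmat (snd y) * pmat (snd x)))"
    by (simp only: pmat_commute[of "fst x"] pmat_commute[of "snd x"])
  also have "\<dots> = comm_sign x y \<cdot>\<^sub>m (pmat2 y * pmat2 x)"
    by (simp add: kron2_smult_left kron2_smult_right pmat2_def kron2_mult comm_sign_def pcommute2_def)
  finally show ?thesis .
qed

lemma smult_one_eq_smult_pmat2D:
  assumes "c \<noteq> 0" "c \<cdot>\<^sub>m 1\<^sub>m 4 = e \<cdot>\<^sub>m pmat2 z"
  shows "z = (PI, PI)"
proof -
  have e: "c * (if r = s then 1 else 0)
         = e * (pauli_entry (fst z) (r div 2) (s div 2) * pauli_entry (snd z) (r mod 2) (s mod 2))"
    if "r < 4" "s < 4" for r s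
    using arg_cong[OF assms(2), of "\<lambda>M. M $$ (r,s)"] that by (simp add: index_pmat2)
  obtain p q where z: "z = (p, q)" by (cases z)
  show ?thesis using e[of 0 0] e[of 1 1] e[of 2 2] assms(1) unfolding z
    by (cases p; cases q; simp add: pauli_entry_def)
qed

lemma smult_pmat2_inject:
  assumes "c \<noteq> 0" "c \<cdot>\<^sub>m pmat2 x = d \<cdot>\<^sub>m pmat2 y"
  shows "x = y"
proof -
  have "(c \<cdot>\<^sub>m pmat2 x) * pmat2 x = (d \<cdot>\<^sub>m pmat2 y) * pmat2 x"
    using assms(2) by simp
  then have "c \<cdot>\<^sub>m 1\<^sub>m 4 = (d * pphase2 y x) \<cdot>\<^sub>m pmat2 (pmul2 y x)"
    by (simp add: mult_smult_assoc_mat[of _ 4 4 _ 4] pmat2_mult)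
  from smult_one_eq_smult_pmat2D[OF assms(1) this] show ?thesis
    by (simp add: pmul2_eq_PI_iff)
qed

lemma smult_pmat2_cancel:
  assumes "a \<cdot>\<^sub>m pmat2 w = b \<cdot>\<^sub>m pmat2 w"
  shows "a = b"
proof -
  have "(a \<cdot>\<^sub>m pmat2 w) * pmat2 w = (b \<cdot>\<^sub>m pmat2 w) * pmat2 w"
    using assms by simp
  then have "a \<cdot>\<^sub>m 1\<^sub>m 4 = (b \<cdot>\<^sub>m 1\<^sub>m 4 :: complex mat)"
    by (simp add: mult_smult_assoc_mat[of _ 4 4 _ 4])
  then show ?thesis by (rule smult_one_mat_inject) simp
qed

lemma smult_pmat2_nonzero:
  assumes "c \<noteq> 0"
  shows "c \<cdot>\<^sub>m pmat2 x \<noteq> 0\<^sub>m 4 4"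
proof
  assume "c \<cdot>\<^sub>m pmat2 x = 0\<^sub>m 4 4"
  then have "c \<cdot>\<^sub>m pmat2 x = 0 \<cdot>\<^sub>m pmat2 x"
    by (simp add: zero_smult_mat)
  with assms show False using smult_pmat2_cancel by blast
qed

lemma clifford2_unitary: "clifford2 G \<Longrightarrow> unitary_mat 4 G"
  by (simp add: clifford2_def)

lemma clifford2_carrier: "clifford2 G \<Longrightarrow> G \<in> carrier_mat 4 4"
  by (simp add: clifford2_def unitary_mat_def)

lemma clifford2I:
  assumes "unitary_mat 4 G" "\<And>x. \<exists>c y. G * pmat2 x * mat_adjoint G = c \<cdot>\<^sub>m pmat2 y"
  shows "clifford2 G"
  unfolding clifford2_def pmat2_def
proof (intro conjI allI)
  fix p q
  show "\<exists>p' q' c. G * kron2 (pmat p) (pmat q) * mat_adjoint G = c \<cdot>\<^sub>m kron2 (pmat p') (pmat q')"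
    using assms(2)[of "(p,q)"] unfolding pmat2_def by auto
qed (use assms in simp)

lemma clifford2_conj_pmat2:
  assumes "clifford2 G"
  shows "\<exists>c. c \<noteq> 0 \<and> G * pmat2 x * mat_adjoint G = c \<cdot>\<^sub>m pmat2 (gate_img G x)"
proof -
  have ex: "\<exists>pq' c. G * kron2 (pmat (fst x)) (pmat (snd x)) * mat_adjoint G
              = c \<cdot>\<^sub>m kron2 (pmat (fst pq')) (pmat (snd pq'))"
    using assms unfolding clifford2_def by (metis fst_conv snd_conv)
  have "\<exists>c. G * kron2 (pmat (fst x)) (pmat (snd x)) * mat_adjoint G
              = c \<cdot>\<^sub>m kron2 (pmat (fst (gate_img G x))) (pmat (snd (gate_img G x)))"
    unfolding gate_img_def by (rule someI_ex) (use ex in auto)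
  then obtain c where c: "G * pmat2 x * mat_adjoint G = c \<cdot>\<^sub>m pmat2 (gate_img G x)"
    unfolding pmat2_def by blast
  have "c \<noteq> 0"
  proof
    assume "c = 0"
    then have "G * pmat2 x * mat_adjoint G = 0\<^sub>m 4 4"
      using c by (simp add: zero_smult_mat)
    then have "1 \<cdot>\<^sub>m pmat2 x = 0\<^sub>m 4 4"
      using unitary_conj_eq_zero[OF clifford2_unitary[OF assms] pmat2_carrier] by simp
    then show False using smult_pmat2_nonzero[of 1 x] by simp
  qed
  with c show ?thesis by blast
qed

lemma gate_img_eqI:
  assumes "clifford2 G" "G * pmat2 x * mat_adjoint G = c \<cdot>\<^sub>m pmat2 y" "c \<noteq> 0"
  shows "gate_img G x = y"
proof -
  obtain d where "d \<noteq> 0" "G * pmat2 x * mat_adjoint G = d \<cdot>\<^sub>m pmat2 (gate_img G x)"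
    using clifford2_conj_pmat2[OF assms(1)] by blast
  then have "d \<cdot>\<^sub>m pmat2 (gate_img G x) = c \<cdot>\<^sub>m pmat2 y"
    using assms(2) by simp
  from smult_pmat2_inject[OF \<open>d \<noteq> 0\<close> this] show ?thesis .
qed

lemma gate_img_pmul2:
  assumes "clifford2 G"
  shows "gate_img G (pmul2 x y) = pmul2 (gate_img G x) (gate_img G y)"
proof -
  note U = clifford2_unitary[OF assms]
  obtain cx where cx: "cx \<noteq> 0" "G * pmat2 x * mat_adjoint G = cx \<cdot>\<^sub>m pmat2 (gate_img G x)"
    using clifford2_conj_pmat2[OF assms] by blast
  obtain cy where cy: "cy \<noteq> 0" "G * pmat2 y * mat_adjoint G = cy \<cdot>\<^sub>m pmat2 (gate_img G y)"
    using clifford2_conj_pmat2[OF assms] by blast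
  define c where "c = cx * cy * pphase2 (gate_img G x) (gate_img G y)"
  have "pphase2 x y \<cdot>\<^sub>m (G * pmat2 (pmul2 x y) * mat_adjoint G) = G * (pmat2 x * pmat2 y) * mat_adjoint G"
    using unitary_matD[OF U] by (simp add: pmat2_mult conj_smult[of _ 4])
  also have "\<dots> = (cx \<cdot>\<^sub>m pmat2 (gate_img G x)) * (cy \<cdot>\<^sub>m pmat2 (gate_img G y))"
    using unitary_conj_mult[OF U pmat2_carrier pmat2_carrier] cx cy by simp
  also have "\<dots> = c \<cdot>\<^sub>m pmat2 (pmul2 (gate_img G x) (gate_img G y))"
    by (simp add: c_def mult_smult_assoc_mat[of _ 4 4 _ 4] mult_smult_distrib[of _ 4 4 _ 4] pmat2_mult mult_ac)
  finally have e: "pphase2 x y \<cdot>\<^sub>m (G * pmat2 (pmul2 x y) * mat_adjoint G)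
                 = c \<cdot>\<^sub>m pmat2 (pmul2 (gate_img G x) (gate_img G y))" .
  have "G * pmat2 (pmul2 x y) * mat_adjoint G
      = inverse (pphase2 x y) \<cdot>\<^sub>m (pphase2 x y \<cdot>\<^sub>m (G * pmat2 (pmul2 x y) * mat_adjoint G))"
    by simp
  also have "\<dots> = (inverse (pphase2 x y) * c) \<cdot>\<^sub>m pmat2 (pmul2 (gate_img G x) (gate_img G y))"
    by (simp only: e smult_smult_mat)
  finally show ?thesis
    by (rule gate_img_eqI[OF assms]) (simp add: c_def cx cy)
qed

lemma gate_img_pmul:
  assumes "clifford2 G"
  shows "gate_img G (pmul p1 p2, pmul q1 q2)
       = (pmul (fst (gate_img G (p1,q1))) (fst (gate_img G (p2,q2))),
          pmul (snd (gate_img G (p1,q1))) (snd (gate_img G (p2,q2))))"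
  using gate_img_pmul2[OF assms, of "(p1,q1)" "(p2,q2)"] by (simp add: pmul2_def)

lemma gate_img_PI:
  assumes "clifford2 G"
  shows "gate_img G (PI,PI) = (PI,PI)"
proof -
  have "G * pmat2 (PI,PI) * mat_adjoint G = 1 \<cdot>\<^sub>m pmat2 (PI,PI)"
    using unitary_matD[OF clifford2_unitary[OF assms]] by (simp add: pmat2_PI)
  from gate_img_eqI[OF assms this] show ?thesis by simp
qed

lemma gate_img_eq_PI_iff:
  assumes "clifford2 G"
  shows "gate_img G z = (PI,PI) \<longleftrightarrow> z = (PI,PI)"
proof
  assume z: "gate_img G z = (PI,PI)"
  note U = clifford2_unitary[OF assms]
  obtain c where c: "c \<noteq> 0" "G * pmat2 z * mat_adjoint G = c \<cdot>\<^sub>m pmat2 (gate_img G z)"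
    using clifford2_conj_pmat2[OF assms] by blast
  have "pmat2 z = mat_adjoint G * (c \<cdot>\<^sub>m 1\<^sub>m 4) * G"
    using unitary_conj_cancel[OF U pmat2_carrier, of z] c z by (simp add: pmat2_PI)
  also have "\<dots> = c \<cdot>\<^sub>m 1\<^sub>m 4"
    using unitary_matD[OF U]
    by (simp add: mult_smult_distrib[of _ 4 4 _ 4] mult_smult_assoc_mat[of _ 4 4 _ 4])
  finally have "c \<cdot>\<^sub>m 1\<^sub>m 4 = 1 \<cdot>\<^sub>m pmat2 z"
    by simp
  from smult_one_eq_smult_pmat2D[OF c(1) this] show "z = (PI,PI)" .
qed (use gate_img_PI[OF assms] in simp)

lemma gate_img_inj:
  assumes "clifford2 G" "gate_img G x = gate_img G y"
  shows "x = y"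
  using gate_img_pmul2[OF assms(1), of x y] assms
  by (simp add: gate_img_eq_PI_iff pmul2_eq_PI_iff)

lemma pcommute2_gate_img:
  assumes "clifford2 G"
  shows "pcommute2 (gate_img G x) (gate_img G y) = pcommute2 x y"
proof -
  note U = clifford2_unitary[OF assms]
  define gx where "gx = gate_img G x"
  define gy where "gy = gate_img G y"
  obtain cx where cx: "cx \<noteq> 0" "G * pmat2 x * mat_adjoint G = cx \<cdot>\<^sub>m pmat2 gx"
    unfolding gx_def using clifford2_conj_pmat2[OF assms] by blast
  obtain cy where cy: "cy \<noteq> 0" "G * pmat2 y * mat_adjoint G = cy \<cdot>\<^sub>m pmat2 gy"
    unfolding gy_def using clifford2_conj_pmat2[OF assms] by blast
  have "G * (pmat2 x * pmat2 y) * mat_adjoint G = (cx * cy) \<cdot>\<^sub>m (pmat2 gx * pmat2 gy)"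
    using unitary_conj_mult[OF U pmat2_carrier pmat2_carrier] cx cy
    by (simp add: mult_smult_assoc_mat[of _ 4 4 _ 4] mult_smult_distrib[of _ 4 4 _ 4] mult.commute)
  also have "\<dots> = (cx * cy * comm_sign gx gy * pphase2 gy gx) \<cdot>\<^sub>m pmat2 (pmul2 gy gx)"
    by (subst pmat2_commute[of gx gy]) (simp add: pmat2_mult mult_ac)
  finally have e1: "G * (pmat2 x * pmat2 y) * mat_adjoint G
                  = (cx * cy * comm_sign gx gy * pphase2 gy gx) \<cdot>\<^sub>m pmat2 (pmul2 gy gx)" .
  have "G * (pmat2 x * pmat2 y) * mat_adjoint G = comm_sign x y \<cdot>\<^sub>m (G * (pmat2 y * pmat2 x) * mat_adjoint G)"
    using unitary_matD[OF U] by (simp add: pmat2_commute[of x y] conj_smult[of _ 4])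
  also have "\<dots> = comm_sign x y \<cdot>\<^sub>m ((cy \<cdot>\<^sub>m pmat2 gy) * (cx \<cdot>\<^sub>m pmat2 gx))"
    using unitary_conj_mult[OF U pmat2_carrier pmat2_carrier] cx cy by simp
  also have "\<dots> = (comm_sign x y * cx * cy * pphase2 gy gx) \<cdot>\<^sub>m pmat2 (pmul2 gy gx)"
    by (simp add: mult_smult_assoc_mat[of _ 4 4 _ 4] mult_smult_distrib[of _ 4 4 _ 4] pmat2_mult mult_ac)
  finally have "cx * cy * comm_sign gx gy * pphase2 gy gx = comm_sign x y * cx * cy * pphase2 gy gx"
    using e1 smult_pmat2_cancel by metis
  then have "comm_sign gx gy = comm_sign x y"
    using cx cy by simp
  then show ?thesis
    unfolding gx_def gy_def comm_sign_def by (auto split: if_splits)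
qed

lemma clifford2_mult:
  assumes "clifford2 A" "clifford2 B"
  shows "clifford2 (A * B)" "gate_img (A * B) x = gate_img A (gate_img B x)"
proof -
  note A = unitary_matD[OF clifford2_unitary[OF assms(1)]]
  note B = unitary_matD[OF clifford2_unitary[OF assms(2)]]
  have conj: "\<exists>c. c \<noteq> 0 \<and> (A * B) * pmat2 y * mat_adjoint (A * B) = c \<cdot>\<^sub>m pmat2 (gate_img A (gate_img B y))"
    for y
  proof -
    obtain cb where cb: "cb \<noteq> 0" "B * pmat2 y * mat_adjoint B = cb \<cdot>\<^sub>m pmat2 (gate_img B y)"
      using clifford2_conj_pmat2[OF assms(2)] by blast
    obtain ca where ca: "ca \<noteq> 0"
      "A * pmat2 (gate_img B y) * mat_adjoint A = ca \<cdot>\<^sub>m pmat2 (gate_img A (gate_img B y))"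
      using clifford2_conj_pmat2[OF assms(1)] by blast
    have "(A * B) * pmat2 y * mat_adjoint (A * B) = A * (B * pmat2 y * mat_adjoint B) * mat_adjoint A"
      using A B by (simp add: mat_adjoint_mult[of _ 4 4 _ 4] assoc_mult_mat[of _ 4 4 _ 4 _ 4])
    also have "\<dots> = (cb * ca) \<cdot>\<^sub>m pmat2 (gate_img A (gate_img B y))"
      using ca cb A by (simp add: conj_smult[of _ 4])
    finally show ?thesis using ca cb by (intro exI[of _ "cb * ca"]) simp
  qed
  show AB: "clifford2 (A * B)"
    using conj unitary_mat_mult[OF clifford2_unitary[OF assms(1)] clifford2_unitary[OF assms(2)]]
    by (intro clifford2I) blast+
  obtain c where "c \<noteq> 0" "(A * B) * pmat2 x * mat_adjoint (A * B) = c \<cdot>\<^sub>m pmat2 (gate_img A (gate_img B x))"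
    using conj by blast
  from gate_img_eqI[OF AB this(2) this(1)] show "gate_img (A * B) x = gate_img A (gate_img B x)" .
qed

definition gate1_img :: "complex mat \<Rightarrow> pauli \<Rightarrow> pauli" where
  "gate1_img a p = (SOME q. \<exists>c. a * pmat p * mat_adjoint a = c \<cdot>\<^sub>m pmat q)"

lemma clifford1_unitary: "clifford1 a \<Longrightarrow> unitary_mat 2 a"
  by (simp add: clifford1_def)

lemma clifford1_carrier: "clifford1 a \<Longrightarrow> a \<in> carrier_mat 2 2"
  by (simp add: clifford1_def unitary_mat_def)

lemma clifford1_conj_pmat:
  assumes "clifford1 a"
  shows "\<exists>c. c \<noteq> 0 \<and> a * pmat p * mat_adjoint a = c \<cdot>\<^sub>m pmat (gate1_img a p)"
proof -
  have ex: "\<exists>q c. a * pmat p * mat_adjoint a = c \<cdot>\<^sub>m pmat q"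
    using assms unfolding clifford1_def by blast
  have "\<exists>c. a * pmat p * mat_adjoint a = c \<cdot>\<^sub>m pmat (gate1_img a p)"
    unfolding gate1_img_def by (rule someI_ex) (use ex in auto)
  then obtain c where c: "a * pmat p * mat_adjoint a = c \<cdot>\<^sub>m pmat (gate1_img a p)"
    by blast
  have "c \<noteq> 0"
  proof
    assume "c = 0"
    then have "a * pmat p * mat_adjoint a = 0\<^sub>m 2 2"
      using c by (simp add: zero_smult_mat)
    then have "1 \<cdot>\<^sub>m pmat p = 0\<^sub>m 2 2"
      using unitary_conj_eq_zero[OF clifford1_unitary[OF assms] pmat_carrier] by simp
    then show False using smult_pmat_nonzero[of 1 p] by simp
  qed
  with c show ?thesis by blast
qed

lemma gate1_img_eqI:
  assumes "clifford1 a" "a * pmat p * mat_adjoint a = c \<cdot>\<^sub>m pmat q" "c \<noteq> 0"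
  shows "gate1_img a p = q"
proof -
  obtain d where "d \<noteq> 0" "a * pmat p * mat_adjoint a = d \<cdot>\<^sub>m pmat (gate1_img a p)"
    using clifford1_conj_pmat[OF assms(1)] by blast
  then have "d \<cdot>\<^sub>m pmat (gate1_img a p) = c \<cdot>\<^sub>m pmat q"
    using assms(2) by simp
  from smult_pmat_inject[OF \<open>d \<noteq> 0\<close> this] show ?thesis .
qed

lemma clifford2_kron2:
  assumes "clifford1 a" "clifford1 b"
  shows "clifford2 (kron2 a b)" "gate_img (kron2 a b) x = (gate1_img a (fst x), gate1_img b (snd x))"
proof -
  note A = unitary_matD[OF clifford1_unitary[OF assms(1)]]
  note B = unitary_matD[OF clifford1_unitary[OF assms(2)]]
  have conj: "\<exists>c. c \<noteq> 0 \<and> kron2 a b * pmat2 y * mat_adjoint (kron2 a b)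
                          = c \<cdot>\<^sub>m pmat2 (gate1_img a (fst y), gate1_img b (snd y))" for y
  proof -
    obtain c1 where c1: "c1 \<noteq> 0" "a * pmat (fst y) * mat_adjoint a = c1 \<cdot>\<^sub>m pmat (gate1_img a (fst y))"
      using clifford1_conj_pmat[OF assms(1)] by blast
    obtain c2 where c2: "c2 \<noteq> 0" "b * pmat (snd y) * mat_adjoint b = c2 \<cdot>\<^sub>m pmat (gate1_img b (snd y))"
      using clifford1_conj_pmat[OF assms(2)] by blast
    have "kron2 a b * pmat2 y * mat_adjoint (kron2 a b)
        = kron2 (a * pmat (fst y) * mat_adjoint a) (b * pmat (snd y) * mat_adjoint b)"
      using A B by (simp add: pmat2_def mat_adjoint_kron2 kron2_mult)
    also have "\<dots> = (c1 * c2) \<cdot>\<^sub>m pmat2 (gate1_img a (fst y), gate1_img b (snd y))"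
      using c1 c2 by (simp add: pmat2_def kron2_smult_left kron2_smult_right mult_ac)
    finally show ?thesis using c1 c2 by (intro exI[of _ "c1 * c2"]) simp
  qed
  have "unitary_mat 4 (kron2 a b)"
    unfolding unitary_mat_def using A B by (simp add: mat_adjoint_kron2 kron2_mult kron2_one)
  then show ab: "clifford2 (kron2 a b)"
    using conj by (intro clifford2I) blast+
  obtain c where "c \<noteq> 0"
    "kron2 a b * pmat2 x * mat_adjoint (kron2 a b) = c \<cdot>\<^sub>m pmat2 (gate1_img a (fst x), gate1_img b (snd x))"
    using conj by blast
  from gate_img_eqI[OF ab this(2) this(1)]
  show "gate_img (kron2 a b) x = (gate1_img a (fst x), gate1_img b (snd x))" .
qed

lemma clifford1_mult:
  assumes "clifford1 a" "clifford1 b"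
  shows "clifford1 (a * b)"
  unfolding clifford1_def
proof (intro conjI allI)
  note A = unitary_matD[OF clifford1_unitary[OF assms(1)]]
  note B = unitary_matD[OF clifford1_unitary[OF assms(2)]]
  show "unitary_mat 2 (a * b)"
    by (rule unitary_mat_mult[OF clifford1_unitary[OF assms(1)] clifford1_unitary[OF assms(2)]])
  fix p
  obtain cb where cb: "b * pmat p * mat_adjoint b = cb \<cdot>\<^sub>m pmat (gate1_img b p)"
    using clifford1_conj_pmat[OF assms(2)] by blast
  obtain ca where ca: "a * pmat (gate1_img b p) * mat_adjoint a = ca \<cdot>\<^sub>m pmat (gate1_img a (gate1_img b p))"
    using clifford1_conj_pmat[OF assms(1)] by blast
  have "(a * b) * pmat p * mat_adjoint (a * b) = a * (b * pmat p * mat_adjoint b) * mat_adjoint a"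
    using A B by (simp add: mat_adjoint_mult[of _ 2 2 _ 2] assoc_mult_mat[of _ 2 2 _ 2 _ 2])
  also have "\<dots> = (cb * ca) \<cdot>\<^sub>m pmat (gate1_img a (gate1_img b p))"
    using ca cb A by (simp add: conj_smult[of _ 2])
  finally show "\<exists>q c. a * b * pmat p * mat_adjoint (a * b) = c \<cdot>\<^sub>m pmat q"
    by blast
qed

lemma clifford1_pmat: "clifford1 (pmat r)"
  unfolding clifford1_def unitary_mat_def
proof (intro conjI allI)
  fix p
  have "pmat r * pmat p * mat_adjoint (pmat r) = (pphase r p * pphase (pmul r p) r) \<cdot>\<^sub>m pmat (pmul (pmul r p) r)"
    by (simp add: pmat_mult mult_smult_assoc_mat[of _ 2 2 _ 2])
  then show "\<exists>q c. pmat r * pmat p * mat_adjoint (pmat r) = c \<cdot>\<^sub>m pmat q"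
    by blast
qed simp_all

lemma clifford1_one: "clifford1 (1\<^sub>m 2)"
  using clifford1_pmat[of PI] by (simp add: pmat_PI)

lemma clifford1_smult:
  assumes "lam * cnj lam = 1" "clifford1 a"
  shows "clifford1 (lam \<cdot>\<^sub>m a)"
  unfolding clifford1_def unitary_mat_def
proof (intro conjI allI)
  note A = unitary_matD[OF clifford1_unitary[OF assms(2)]]
  show "lam \<cdot>\<^sub>m a \<in> carrier_mat 2 2"
    using A by simp
  show "lam \<cdot>\<^sub>m a * mat_adjoint (lam \<cdot>\<^sub>m a) = 1\<^sub>m 2"
    using A assms(1)
    by (simp add: mat_adjoint_smult mult_smult_assoc_mat[of _ 2 2 _ 2] mult_smult_distrib[of _ 2 2 _ 2] mult.commute)
  fix p
  obtain c where c: "a * pmat p * mat_adjoint a = c \<cdot>\<^sub>m pmat (gate1_img a p)"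
    using clifford1_conj_pmat[OF assms(2)] by blast
  have "lam \<cdot>\<^sub>m a * pmat p * mat_adjoint (lam \<cdot>\<^sub>m a) = (lam * cnj lam) \<cdot>\<^sub>m (a * pmat p * mat_adjoint a)"
    using A
    by (simp add: mat_adjoint_smult mult_smult_assoc_mat[of _ 2 2 _ 2] mult_smult_distrib[of _ 2 2 _ 2] mult.commute)
  also have "\<dots> = c \<cdot>\<^sub>m pmat (gate1_img a p)"
    using assms(1) c by simp
  finally show "\<exists>q c. lam \<cdot>\<^sub>m a * pmat p * mat_adjoint (lam \<cdot>\<^sub>m a) = c \<cdot>\<^sub>m pmat q"
    by blast
qed

lemma gate1_img_pmul:
  assumes "clifford1 a"
  shows "gate1_img a (pmul p q) = pmul (gate1_img a p) (gate1_img a q)"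
  using gate_img_pmul2[OF clifford2_kron2(1)[OF assms clifford1_one], of "(p,PI)" "(q,PI)"]
  by (simp add: clifford2_kron2(2)[OF assms clifford1_one] pmul2_def)

lemma gate1_img_PI:
  assumes "clifford1 a"
  shows "gate1_img a PI = PI"
  using gate1_img_pmul[OF assms, of PI PI] by simp

lemma gate1_img_PY:
  assumes "clifford1 a"
  shows "gate1_img a PY = pmul (gate1_img a PX) (gate1_img a PZ)"
  using gate1_img_pmul[OF assms, of PX PZ] by simp

lemma clifford1_from_XZ:
  assumes U: "unitary_mat 2 a"
    and X: "a * pmat PX * mat_adjoint a = c1 \<cdot>\<^sub>m pmat s" "c1 \<noteq> 0"
    and Z: "a * pmat PZ * mat_adjoint a = c2 \<cdot>\<^sub>m pmat t" "c2 \<noteq> 0"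
  shows "clifford1 a \<and> gate1_img a PX = s \<and> gate1_img a PZ = t"
proof -
  note A = unitary_matD[OF U]
  have "clifford1 a"
    unfolding clifford1_def
  proof (intro conjI allI)
    fix p
    show "\<exists>q c. a * pmat p * mat_adjoint a = c \<cdot>\<^sub>m pmat q"
    proof (cases p)
      case PI
      then have "a * pmat p * mat_adjoint a = 1 \<cdot>\<^sub>m pmat PI"
        using A by (simp add: pmat_PI)
      then show ?thesis by blast
    next
      case PY
      have Y: "pmat PY = \<i> \<cdot>\<^sub>m (pmat PX * pmat PZ)"
        by (simp add: pmat_mult)
      have "a * pmat PY * mat_adjoint a = \<i> \<cdot>\<^sub>m ((a * pmat PX * mat_adjoint a) * (a * pmat PZ * mat_adjoint a))"
        unfolding Y using A by (simp add: conj_smult[of _ 2] unitary_conj_mult[OF U])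
      also have "\<dots> = (\<i> * c1 * c2 * pphase s t) \<cdot>\<^sub>m pmat (pmul s t)"
        unfolding X Z
        by (simp add: mult_smult_assoc_mat[of _ 2 2 _ 2] mult_smult_distrib[of _ 2 2 _ 2] pmat_mult mult_ac)
      finally show ?thesis using PY by blast
    qed (use X Z in blast)+
  qed (rule U)
  then show ?thesis
    using gate1_img_eqI[OF _ X] gate1_img_eqI[OF _ Z] by blast
qed

definition mat2 :: "complex \<Rightarrow> complex \<Rightarrow> complex \<Rightarrow> complex \<Rightarrow> complex mat" where
  "mat2 a b c d = mat_of_rows_list 2 [[a, b], [c, d]]"

lemma mat2_carrier[simp]: "mat2 a b c d \<in> carrier_mat 2 2"
  unfolding mat2_def mat_of_rows_list_def carrier_mat_def by simp

lemma dim_mat2[simp]: "dim_row (mat2 a b c d) = 2" "dim_col (mat2 a b c d) = 2"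
  unfolding mat2_def mat_of_rows_list_def by simp_all

lemma index_mat2:
  "i < 2 \<Longrightarrow> j < 2 \<Longrightarrow>
   mat2 a b c d $$ (i,j) = (if i = 0 then (if j = 0 then a else b) else (if j = 0 then c else d))"
  unfolding mat2_def mat_of_rows_list_def by (auto simp: less_2_iff)

lemma mat2_mult: "mat2 a b c d * mat2 e f g h = mat2 (a*e + b*g) (a*f + b*h) (c*e + d*g) (c*f + d*h)"
  by (rule eq_mat2I) (simp_all add: index_mult_mat2 index_mat2 del: index_mult_mat)

lemma mat_adjoint_mat2: "mat_adjoint (mat2 a b c d) = mat2 (cnj a) (cnj c) (cnj b) (cnj d)"
  by (rule eq_mat2I) (simp_all add: index_mat2)

lemma smult_mat2: "k \<cdot>\<^sub>m mat2 a b c d = mat2 (k*a) (k*b) (k*c) (k*d)"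
  by (rule eq_mat2I) (simp_all add: index_mat2)

lemma mat2_eq_iff: "mat2 a b c d = mat2 a' b' c' d' \<longleftrightarrow> a = a' \<and> b = b' \<and> c = c' \<and> d = d'"
  by (metis index_mat2 zero_less_numeral one_less_numeral_iff semiring_norm(76) zero_neq_one)

lemma pmat_as_mat2:
  "pmat PI = mat2 1 0 0 1" "pmat PX = mat2 0 1 1 0" "pmat PY = mat2 0 (-\<i>) \<i> 0" "pmat PZ = mat2 1 0 0 (-1)"
  unfolding pmat_def mat2_def by simp_all

text \<open>$(1 + i)/2 = e^{i \pi / 4} / \sqrt{2}$ normalises the Hadamard-type matrices below without
  square roots.\<close>

definition hadamard_coeff :: complex where
  "hadamard_coeff = (1 + \<i>) / 2"

definition frame_mat :: "pauli \<Rightarrow> pauli \<Rightarrow> complex mat" where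
  "frame_mat s t = (let h = hadamard_coeff in
     if s = PX \<and> t = PZ then mat2 1 0 0 1
     else if s = PZ \<and> t = PX then mat2 h h h (-h)
     else if s = PY \<and> t = PZ then mat2 1 0 0 \<i>
     else if s = PY \<and> t = PX then mat2 h (h*\<i>) h (-h*\<i>)
     else if s = PZ \<and> t = PY then mat2 h h (h*\<i>) (-h*\<i>)
     else mat2 (h*\<i>) h h (h*\<i>))"

lemma frame_mat_conj:
  assumes "s \<noteq> t" "s \<noteq> PI" "t \<noteq> PI"
  shows "unitary_mat 2 (frame_mat s t) \<and>
    (\<exists>c1. c1 \<noteq> 0 \<and> frame_mat s t * pmat PX * mat_adjoint (frame_mat s t) = c1 \<cdot>\<^sub>m pmat s) \<and>
    (\<exists>c2. c2 \<noteq> 0 \<and> frame_mat s t * pmat PZ * mat_adjoint (frame_mat s t) = c2 \<cdot>\<^sub>m pmat t)"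
  using assms
  apply (cases s; cases t)
  apply (simp_all add: frame_mat_def Let_def unitary_mat_def pmat_PI[symmetric] pmat_as_mat2
      mat_adjoint_mat2 mat2_mult smult_mat2 mat2_eq_iff)
  apply (auto simp: hadamard_coeff_def complex_eq_iff intro!: exI[of _ 1] exI[of _ "-1"])
  done

lemma clifford1_exists_XZ:
  assumes "s \<noteq> t" "s \<noteq> PI" "t \<noteq> PI"
  shows "\<exists>a. clifford1 a \<and> gate1_img a PX = s \<and> gate1_img a PZ = t"
  using frame_mat_conj[OF assms] clifford1_from_XZ by blast

lemma clifford1_exists:
  assumes "u \<noteq> v" "u \<noteq> PI" "v \<noteq> PI" "s \<noteq> t" "s \<noteq> PI" "t \<noteq> PI"
  shows "\<exists>a. clifford1 a \<and> gate1_img a u = s \<and> gate1_img a v = t"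
proof -
  define sx where "sx = (if u = PX then s else if v = PX then t else pmul s t)"
  define tz where "tz = (if u = PZ then s else if v = PZ then t else pmul s t)"
  have st: "pmul s t \<noteq> PI" "pmul s t \<noteq> s" "pmul s t \<noteq> t" "s \<noteq> pmul s t" "t \<noteq> pmul s t"
    using assms by (auto simp: pmul_eq_PI_iff pmul_eq_left_iff pmul_eq_right_iff dest: sym)
  have "sx \<noteq> tz \<and> sx \<noteq> PI \<and> tz \<noteq> PI"
    using assms st unfolding sx_def tz_def by (cases u; cases v; simp)
  then obtain a where a: "clifford1 a" "gate1_img a PX = sx" "gate1_img a PZ = tz"
    using clifford1_exists_XZ by blast
  have "gate1_img a u = s \<and> gate1_img a v = t"
    using assms a(2,3) gate1_img_PY[OF a(1)] gate1_img_PI[OF a(1)] unfolding sx_def tz_def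
    by (cases u; cases v; simp add: pmul_cancel_left pmul_cancel_right)
  with a(1) show ?thesis by blast
qed

definition swap_index :: "nat \<Rightarrow> nat" where
  "swap_index r = (if r = 1 then 2 else if r = 2 then 1 else r)"

definition cz_sign :: "nat \<Rightarrow> complex" where
  "cz_sign r = (if r = 3 then -1 else 1)"

lemma swap_index_less: "r < 4 \<Longrightarrow> swap_index r < 4"
  by (simp add: swap_index_def)

lemma swap_index_swap_index: "swap_index (swap_index r) = r"
  by (simp add: swap_index_def)

lemma dim_SWAP[simp]: "dim_row SWAP = 4" "dim_col SWAP = 4"
  unfolding SWAP_def mat_of_rows_list_def by simp_all

lemma dim_CZ[simp]: "dim_row CZ = 4" "dim_col CZ = 4"
  unfolding CZ_def mat_of_rows_list_def by simp_all

lemma SWAP_carrier[simp]: "SWAP \<in> carrier_mat 4 4"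
  unfolding carrier_mat_def by simp

lemma CZ_carrier[simp]: "CZ \<in> carrier_mat 4 4"
  unfolding carrier_mat_def by simp

lemma index_SWAP: "r < 4 \<Longrightarrow> s < 4 \<Longrightarrow> SWAP $$ (r,s) = (if s = swap_index r then 1 else 0)"
  unfolding SWAP_def mat_of_rows_list_def swap_index_def less_4_iff by auto

lemma index_CZ: "r < 4 \<Longrightarrow> s < 4 \<Longrightarrow> CZ $$ (r,s) = (if r = s then cz_sign r else 0)"
  unfolding CZ_def mat_of_rows_list_def cz_sign_def less_4_iff by auto

lemma index_SWAP_mult:
  assumes "M \<in> carrier_mat 4 n" "r < 4" "s < n"
  shows "(SWAP * M) $$ (r,s) = M $$ (swap_index r, s)"
  using assms by (simp add: scalar_prod_def sum_upt_4 index_SWAP) (auto simp: swap_index_def less_4_iff)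

lemma index_mult_SWAP:
  assumes "M \<in> carrier_mat n 4" "r < n" "s < 4"
  shows "(M * SWAP) $$ (r,s) = M $$ (r, swap_index s)"
  using assms by (simp add: scalar_prod_def sum_upt_4 index_SWAP) (auto simp: swap_index_def less_4_iff)

lemma index_CZ_mult:
  assumes "M \<in> carrier_mat 4 n" "r < 4" "s < n"
  shows "(CZ * M) $$ (r,s) = cz_sign r * M $$ (r, s)"
  using assms by (simp add: scalar_prod_def sum_upt_4 index_CZ) (auto simp: less_4_iff)

lemma index_mult_CZ:
  assumes "M \<in> carrier_mat n 4" "r < n" "s < 4"
  shows "(M * CZ) $$ (r,s) = M $$ (r, s) * cz_sign s"
  using assms by (simp add: scalar_prod_def sum_upt_4 index_CZ) (auto simp: less_4_iff)

lemma mat_adjoint_SWAP: "mat_adjoint SWAP = SWAP"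
  by (rule eq_matI) (auto simp: index_SWAP swap_index_def)

lemma mat_adjoint_CZ: "mat_adjoint CZ = CZ"
  by (rule eq_matI) (auto simp: index_CZ cz_sign_def)

lemma SWAP_mult_self: "SWAP * SWAP = 1\<^sub>m 4"
proof (rule eq_matI)
  fix i j assume "i < dim_row (1\<^sub>m 4 :: complex mat)" "j < dim_col (1\<^sub>m 4 :: complex mat)"
  then show "(SWAP * SWAP) $$ (i,j) = 1\<^sub>m 4 $$ (i,j)"
    by (auto simp: index_SWAP_mult[of _ 4] index_SWAP swap_index_less swap_index_swap_index
        simp del: index_mult_mat)
qed auto

lemma CZ_mult_self: "CZ * CZ = 1\<^sub>m 4"
proof (rule eq_matI)
  fix i j assume "i < dim_row (1\<^sub>m 4 :: complex mat)" "j < dim_col (1\<^sub>m 4 :: complex mat)"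
  then show "(CZ * CZ) $$ (i,j) = 1\<^sub>m 4 $$ (i,j)"
    by (auto simp: index_CZ_mult[of _ 4] index_CZ cz_sign_def simp del: index_mult_mat)
qed auto

lemma SWAP_conj_kron2:
  assumes "A \<in> carrier_mat 2 2" "B \<in> carrier_mat 2 2"
  shows "SWAP * kron2 A B * SWAP = kron2 B A"
proof (rule eq_matI)
  fix r s assume "r < dim_row (kron2 B A)" "s < dim_col (kron2 B A)"
  then have r: "r < 4" and s: "s < 4" by auto
  have "swap_index r div 2 = r mod 2" "swap_index r mod 2 = r div 2"
       "swap_index s div 2 = s mod 2" "swap_index s mod 2 = s div 2"
    using r s by (auto simp: swap_index_def less_4_iff)
  then show "(SWAP * kron2 A B * SWAP) $$ (r, s) = kron2 B A $$ (r, s)"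
    using r s by (simp add: index_mult_SWAP[of _ 4] index_SWAP_mult[of _ 4] swap_index_less index_kron2
        mult.commute del: index_mult_mat)
qed auto

lemma clifford2_SWAP: "clifford2 SWAP" "gate_img SWAP x = (snd x, fst x)"
proof -
  have conj: "SWAP * pmat2 y * mat_adjoint SWAP = 1 \<cdot>\<^sub>m pmat2 (snd y, fst y)" for y
    by (simp add: mat_adjoint_SWAP pmat2_def SWAP_conj_kron2)
  show SW: "clifford2 SWAP"
  proof (rule clifford2I)
    show "unitary_mat 4 SWAP"
      by (simp add: unitary_mat_def mat_adjoint_SWAP SWAP_mult_self)
    show "\<exists>c y. SWAP * pmat2 x * mat_adjoint SWAP = c \<cdot>\<^sub>m pmat2 y" for x
      using conj by blast
  qed
  show "gate_img SWAP x = (snd x, fst x)"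
    by (rule gate_img_eqI[OF SW conj]) simp
qed

definition has_x :: "pauli \<Rightarrow> bool" where
  "has_x p \<longleftrightarrow> p = PX \<or> p = PY"

definition cz_img :: "pauli \<times> pauli \<Rightarrow> pauli \<times> pauli" where
  "cz_img x = (pmul (fst x) (if has_x (snd x) then PZ else PI), pmul (snd x) (if has_x (fst x) then PZ else PI))"

definition cz_phase :: "pauli \<times> pauli \<Rightarrow> complex" where
  "cz_phase x = (if x = (PX,PY) \<or> x = (PY,PX) then -1 else 1)"

lemma CZ_conj_pmat2: "CZ * pmat2 x * CZ = cz_phase x \<cdot>\<^sub>m pmat2 (cz_img x)"
proof (rule eq_matI)
  obtain p q where x: "x = (p,q)" by (cases x)
  have "\<forall>r<4. \<forall>s<4.
      cz_sign r * (pauli_entry p (r div 2) (s div 2) * pauli_entry q (r mod 2) (s mod 2)) * cz_sign s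
    = cz_phase (p,q) * (pauli_entry (fst (cz_img (p,q))) (r div 2) (s div 2)
                        * pauli_entry (snd (cz_img (p,q))) (r mod 2) (s mod 2))"
    unfolding all_less_4_iff
    by (cases p; cases q; simp add: cz_img_def cz_phase_def has_x_def pauli_entry_def cz_sign_def)
  moreover fix r s assume "r < dim_row (cz_phase x \<cdot>\<^sub>m pmat2 (cz_img x))" "s < dim_col (cz_phase x \<cdot>\<^sub>m pmat2 (cz_img x))"
  ultimately show "(CZ * pmat2 x * CZ) $$ (r, s) = (cz_phase x \<cdot>\<^sub>m pmat2 (cz_img x)) $$ (r, s)"
    unfolding x by (simp add: index_mult_CZ[of _ 4] index_CZ_mult[of _ 4] index_pmat2 del: index_mult_mat)
qed auto

lemma clifford2_CZ: "clifford2 CZ" "gate_img CZ x = cz_img x"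
proof -
  have conj: "CZ * pmat2 y * mat_adjoint CZ = cz_phase y \<cdot>\<^sub>m pmat2 (cz_img y)" for y
    by (simp add: mat_adjoint_CZ CZ_conj_pmat2)
  show CZ: "clifford2 CZ"
  proof (rule clifford2I)
    show "unitary_mat 4 CZ"
      by (simp add: unitary_mat_def mat_adjoint_CZ CZ_mult_self)
    show "\<exists>c y. CZ * pmat2 x * mat_adjoint CZ = c \<cdot>\<^sub>m pmat2 y" for x
      using conj by blast
  qed
  show "gate_img CZ x = cz_img x"
    by (rule gate_img_eqI[OF CZ conj]) (simp add: cz_phase_def)
qed

lemma clifford2_FSWAP: "clifford2 (CZ * SWAP)" "gate_img (CZ * SWAP) x = cz_img (snd x, fst x)"
  using clifford2_mult[OF clifford2_CZ(1) clifford2_SWAP(1)] by (simp_all add: clifford2_CZ(2) clifford2_SWAP(2))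

section \<open>A Clifford gate is determined up to a Pauli by its action on local Paulis\<close>

lemma index_mult_diag:
  fixes M :: "complex mat"
  assumes M: "M \<in> carrier_mat n n" and D: "D \<in> carrier_mat n n"
    and diag: "\<And>r s. r < n \<Longrightarrow> s < n \<Longrightarrow> D $$ (r,s) = (if r = s then d r else 0)"
    and rs: "r < n" "s < n"
  shows "(M * D) $$ (r,s) = M $$ (r,s) * d s" "(D * M) $$ (r,s) = d r * M $$ (r,s)"
proof -
  have "(M * D) $$ (r,s) = (\<Sum>t\<in>{0..<n}. M $$ (r,t) * D $$ (t,s))"
    using M D rs by (simp add: scalar_prod_def)
  also have "\<dots> = (\<Sum>t\<in>{0..<n}. if t = s then M $$ (r,s) * d s else 0)"
    by (rule sum.cong) (auto simp: diag rs)
  finally show "(M * D) $$ (r,s) = M $$ (r,s) * d s"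
    using rs by simp
  have "(D * M) $$ (r,s) = (\<Sum>t\<in>{0..<n}. D $$ (r,t) * M $$ (t,s))"
    using M D rs by (simp add: scalar_prod_def)
  also have "\<dots> = (\<Sum>t\<in>{0..<n}. if t = r then d r * M $$ (r,s) else 0)"
    by (rule sum.cong) (auto simp: diag rs)
  finally show "(D * M) $$ (r,s) = d r * M $$ (r,s)"
    using rs by simp
qed

lemma index_mult_perm:
  fixes M :: "complex mat"
  assumes M: "M \<in> carrier_mat n n" and P: "P \<in> carrier_mat n n"
    and perm: "\<And>r s. r < n \<Longrightarrow> s < n \<Longrightarrow> P $$ (r,s) = (if r = f s then 1 else 0)"
    and f: "\<And>t. t < n \<Longrightarrow> f t < n" "\<And>t. t < n \<Longrightarrow> f (f t) = t"
    and rs: "r < n" "s < n"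
  shows "(M * P) $$ (r,s) = M $$ (r, f s)" "(P * M) $$ (r,s) = M $$ (f r, s)"
proof -
  have "(M * P) $$ (r,s) = (\<Sum>t\<in>{0..<n}. M $$ (r,t) * P $$ (t,s))"
    using M P rs by (simp add: scalar_prod_def)
  also have "\<dots> = (\<Sum>t\<in>{0..<n}. if t = f s then M $$ (r, f s) else 0)"
    by (rule sum.cong) (auto simp: perm rs)
  finally show "(M * P) $$ (r,s) = M $$ (r, f s)"
    using rs f by simp
  have "(P * M) $$ (r,s) = (\<Sum>t\<in>{0..<n}. P $$ (r,t) * M $$ (t,s))"
    using M P rs by (simp add: scalar_prod_def)
  also have "\<dots> = (\<Sum>t\<in>{0..<n}. if t = f r then M $$ (f r, s) else 0)"
  proof (rule sum.cong)
    fix t assume "t \<in> {0..<n}"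
    then have "(r = f t) = (t = f r)"
      using f rs by auto
    then show "P $$ (r,t) * M $$ (t,s) = (if t = f r then M $$ (f r, s) else 0)"
      using perm[OF rs(1)] \<open>t \<in> {0..<n}\<close> by auto
  qed simp
  finally show "(P * M) $$ (r,s) = M $$ (f r, s)"
    using rs f by simp
qed

definition local_paulis :: "(pauli \<times> pauli) set" where
  "local_paulis = {(PX,PI), (PZ,PI), (PI,PX), (PI,PZ)}"

lemma index_pmat2_local:
  assumes "r < 4" "s < 4"
  shows "pmat2 (PZ,PI) $$ (r,s) = (if r = s then (if r < 2 then 1 else -1) else 0)"
    and "pmat2 (PI,PZ) $$ (r,s) = (if r = s then (if even r then 1 else -1) else 0)"
    and "pmat2 (PX,PI) $$ (r,s) = (if r = (s + 2) mod 4 then 1 else 0)"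
    and "pmat2 (PI,PX) $$ (r,s) = (if r = (if even s then s + 1 else s - 1) then 1 else 0)"
  using assms unfolding less_4_iff by (elim disjE; simp add: index_pmat2 pauli_entry_def)+

lemma complex_eq_neg_self_iff: "((x::complex) = - x) \<longleftrightarrow> x = 0" "(- x = (x::complex)) \<longleftrightarrow> x = 0"
  by (simp_all add: eq_neg_iff_add_eq_0 neg_eq_iff_add_eq_0 mult_2[symmetric])

lemma commutes_local_paulis_imp_scalar:
  fixes M :: "complex mat"
  assumes M: "M \<in> carrier_mat 4 4"
    and comm: "\<And>\<sigma>. \<sigma> \<in> local_paulis \<Longrightarrow> M * pmat2 \<sigma> = pmat2 \<sigma> * M"
  shows "M = M $$ (0,0) \<cdot>\<^sub>m 1\<^sub>m 4"
proof -
  have entry: "(M * pmat2 \<sigma>) $$ (r,s) = (pmat2 \<sigma> * M) $$ (r,s)"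
    if "\<sigma> \<in> {(PX,PI),(PZ,PI),(PI,PX),(PI,PZ)}" for \<sigma> r s
    using comm[of \<sigma>] that unfolding local_paulis_def by simp
  have Z1: "M $$ (r,s) * (if s < 2 then 1 else -1) = (if r < 2 then 1 else -1) * M $$ (r,s)"
    if "r < 4" "s < 4" for r s
    using entry[of "(PZ,PI)" r s] index_mult_diag[OF M pmat2_carrier index_pmat2_local(1) that] by simp
  have Z2: "M $$ (r,s) * (if even s then 1 else -1) = (if even r then 1 else -1) * M $$ (r,s)"
    if "r < 4" "s < 4" for r s
    using entry[of "(PI,PZ)" r s] index_mult_diag[OF M pmat2_carrier index_pmat2_local(2) that] by simp
  have X1: "M $$ (r, (s + 2) mod 4) = M $$ ((r + 2) mod 4, s)" if "r < 4" "s < 4" for r s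
  proof -
    have "t < 4 \<Longrightarrow> ((t + 2) mod 4 + 2) mod 4 = t" for t :: nat
      unfolding less_4_iff by auto
    from index_mult_perm[OF M pmat2_carrier index_pmat2_local(3) _ this that]
    show ?thesis using entry[of "(PX,PI)" r s] by simp
  qed
  have X2: "M $$ (r, if even s then s + 1 else s - 1) = M $$ (if even r then r + 1 else r - 1, s)"
    if "r < 4" "s < 4" for r s
  proof -
    have "t < 4 \<Longrightarrow> (if even t then t + 1 else t - 1) < 4" for t :: nat
      unfolding less_4_iff by auto
    moreover have "t < 4 \<Longrightarrow> (let u = if even t then t + 1 else t - 1 in if even u then u + 1 else u - 1) = t"
      for t :: nat
      unfolding less_4_iff by auto
    ultimately show ?thesis
      using entry[of "(PI,PX)" r s] index_mult_perm[OF M pmat2_carrier index_pmat2_local(4) _ _ that]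
      by (simp add: Let_def)
  qed
  have "M $$ (1,1) = M $$ (0,0)"
    using X2[of 0 1] by simp
  moreover have "M $$ (0,0) = M $$ (2,2)"
    using X1[of 0 2] by (simp only: zero_less_numeral numeral_less_iff semiring_norm) simp
  moreover have "M $$ (1,1) = M $$ (3,3)"
    using X1[of 1 3] by simp
  ultimately have d: "M $$ (1,1) = M $$ (0,0)" "M $$ (2,2) = M $$ (0,0)" "M $$ (3,3) = M $$ (0,0)"
    by simp_all
  show ?thesis
  proof (rule eq_matI)
    fix r s assume "r < dim_row (M $$ (0,0) \<cdot>\<^sub>m 1\<^sub>m 4)" "s < dim_col (M $$ (0,0) \<cdot>\<^sub>m 1\<^sub>m 4)"
    then have r: "r < 4" and s: "s < 4" by auto
    then show "M $$ (r,s) = (M $$ (0,0) \<cdot>\<^sub>m 1\<^sub>m 4) $$ (r,s)"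
      using Z1[OF r s] Z2[OF r s] d r s unfolding less_4_iff
      by (elim disjE; simp add: complex_eq_neg_self_iff)
  qed (use M in auto)
qed

lemma commutation_sign_cases:
  assumes W: "unitary_mat 4 W" and e: "W * pmat2 \<sigma> = e \<cdot>\<^sub>m (pmat2 \<sigma> * W)"
  shows "e = 1 \<or> e = -1"
proof -
  note W = unitary_matD[OF W]
  let ?K = "pmat2 \<sigma>"
  have K: "?K \<in> carrier_mat 4 4" "?K * ?K = 1\<^sub>m 4"
    by simp_all
  have "W = (W * ?K) * ?K"
    using W(1) K by (simp add: assoc_mult_mat[of _ 4 4 _ 4 _ 4])
  also have "\<dots> = e \<cdot>\<^sub>m ((?K * W) * ?K)"
    unfolding e using W(1) by (simp add: mult_smult_assoc_mat[of _ 4 4 _ 4])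
  also have "(?K * W) * ?K = ?K * (W * ?K)"
    using W(1) by (simp add: assoc_mult_mat[of _ 4 4 _ 4 _ 4])
  also have "\<dots> = e \<cdot>\<^sub>m (?K * (?K * W))"
    unfolding e using W(1) by (simp add: mult_smult_distrib[of _ 4 4 _ 4])
  also have "?K * (?K * W) = W"
    using W(1) K by (simp add: assoc_mult_mat[of _ 4 4 _ 4 _ 4, symmetric])
  finally have "1 \<cdot>\<^sub>m W * mat_adjoint W = (e * e) \<cdot>\<^sub>m W * mat_adjoint W"
    by simp
  then have "1 \<cdot>\<^sub>m 1\<^sub>m 4 = ((e * e) \<cdot>\<^sub>m 1\<^sub>m 4 :: complex mat)"
    using W by (simp add: mult_smult_assoc_mat[of _ 4 4 _ 4])
  then have "e * e = 1"
    by (rule smult_one_mat_inject[symmetric]) simp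
  then show ?thesis
    by (metis square_eq_1_iff)
qed

lemma exists_pauli_commute_XZ: "\<exists>p. (pcommute PX p \<longleftrightarrow> bx) \<and> (pcommute PZ p \<longleftrightarrow> bz)"
proof (cases bx; cases bz)
  assume "bx" "bz" then show ?thesis by (intro exI[of _ PI]) (simp add: pcommute_def)
next
  assume "bx" "\<not> bz" then show ?thesis by (intro exI[of _ PX]) (simp add: pcommute_def)
next
  assume "\<not> bx" "bz" then show ?thesis by (intro exI[of _ PZ]) (simp add: pcommute_def)
next
  assume "\<not> bx" "\<not> bz" then show ?thesis by (intro exI[of _ PY]) (simp add: pcommute_def)
qed

lemma exists_pauli_comm_signs:
  assumes "\<And>\<sigma>. \<sigma> \<in> local_paulis \<Longrightarrow> e \<sigma> = 1 \<or> e \<sigma> = -1"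
  shows "\<exists>p q. \<forall>\<sigma>\<in>local_paulis. comm_sign \<sigma> (p,q) = e \<sigma>"
proof -
  obtain p where p: "pcommute PX p \<longleftrightarrow> e (PX,PI) = 1" "pcommute PZ p \<longleftrightarrow> e (PZ,PI) = 1"
    using exists_pauli_commute_XZ by blast
  obtain q where q: "pcommute PX q \<longleftrightarrow> e (PI,PX) = 1" "pcommute PZ q \<longleftrightarrow> e (PI,PZ) = 1"
    using exists_pauli_commute_XZ by blast
  have sign: "comm_sign (a,PI) (p,q) = (if pcommute a p then 1 else -1)"
              "comm_sign (PI,a) (p,q) = (if pcommute a q then 1 else -1)" for a
    by (simp_all add: comm_sign_def pcommute2_def pcommute_def)
  have "comm_sign \<sigma> (p,q) = e \<sigma>" if "\<sigma> \<in> local_paulis" for \<sigma>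
    using that assms[OF that] p q unfolding local_paulis_def by (auto simp: sign)
  then show ?thesis
    by blast
qed

lemma sign_commutes_local_paulis_imp_pauli:
  assumes U: "unitary_mat 4 W"
    and sign_comm: "\<And>\<sigma>. \<sigma> \<in> local_paulis \<Longrightarrow> \<exists>e. W * pmat2 \<sigma> = e \<cdot>\<^sub>m (pmat2 \<sigma> * W)"
  shows "\<exists>lam p q. W = lam \<cdot>\<^sub>m pmat2 (p,q) \<and> lam * cnj lam = 1"
proof -
  note W = unitary_matD[OF U]
  obtain e where e: "\<And>\<sigma>. \<sigma> \<in> local_paulis \<Longrightarrow> W * pmat2 \<sigma> = e \<sigma> \<cdot>\<^sub>m (pmat2 \<sigma> * W)"
    using sign_comm by metis
  obtain p q where pq: "\<And>\<sigma>. \<sigma> \<in> local_paulis \<Longrightarrow> comm_sign \<sigma> (p,q) = e \<sigma>"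
    using exists_pauli_comm_signs[of e] commutation_sign_cases[OF U e] by blast
  define T where "T = pmat2 (p,q)"
  have T: "T \<in> carrier_mat 4 4" "T * T = 1\<^sub>m 4"
    unfolding T_def by simp_all
  \<comment> \<open>$T$ has the same commutation signs as $W$, so they cancel in $T W$.\<close>
  have "(T * W) * pmat2 \<sigma> = pmat2 \<sigma> * (T * W)" if \<sigma>: "\<sigma> \<in> local_paulis" for \<sigma>
  proof -
    have sq: "e \<sigma> * e \<sigma> = 1"
      using pq[OF \<sigma>, symmetric] unfolding comm_sign_def by (auto split: if_splits)
    have "(T * W) * pmat2 \<sigma> = e \<sigma> \<cdot>\<^sub>m ((T * pmat2 \<sigma>) * W)"
      using T W e[OF \<sigma>]
      by (simp add: assoc_mult_mat[of _ 4 4 _ 4 _ 4] mult_smult_distrib[of _ 4 4 _ 4])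
    also have "T * pmat2 \<sigma> = e \<sigma> \<cdot>\<^sub>m (pmat2 \<sigma> * T)"
      unfolding T_def pmat2_commute[of "(p,q)"] comm_sign_sym[of "(p,q)"] pq[OF \<sigma>] ..
    finally show ?thesis
      using T W sq by (simp add: mult_smult_assoc_mat[of _ 4 4 _ 4] assoc_mult_mat[of _ 4 4 _ 4 _ 4])
  qed
  then have "T * W = (T * W) $$ (0,0) \<cdot>\<^sub>m 1\<^sub>m 4"
    using T W by (intro commutes_local_paulis_imp_scalar) auto
  then obtain lam where TW: "T * W = lam \<cdot>\<^sub>m 1\<^sub>m 4"
    by blast
  have "W = T * (T * W)"
    using T W by (simp add: assoc_mult_mat[of _ 4 4 _ 4 _ 4, symmetric])
  also have "\<dots> = lam \<cdot>\<^sub>m T"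
    using T by (simp add: TW mult_smult_distrib[of _ 4 4 _ 4])
  finally have Wl: "W = lam \<cdot>\<^sub>m T" .
  have "1 \<cdot>\<^sub>m 1\<^sub>m 4 = (lam \<cdot>\<^sub>m T) * mat_adjoint (lam \<cdot>\<^sub>m T)"
    using W(2) Wl by simp
  also have "\<dots> = (lam * cnj lam) \<cdot>\<^sub>m 1\<^sub>m 4"
    unfolding mat_adjoint_smult using T
    by (simp add: T_def mult_smult_assoc_mat[of _ 4 4 _ 4] mult_smult_distrib[of _ 4 4 _ 4] mult.commute)
  finally have "lam * cnj lam = 1"
    by (rule smult_one_mat_inject[symmetric]) simp
  then show ?thesis
    using Wl unfolding T_def by blast
qed

lemma same_conj_imp_sign_commute:
  assumes uG: "unitary_mat 4 G" and uH: "unitary_mat 4 H"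
    and eG: "G * pmat2 s * mat_adjoint G = cG \<cdot>\<^sub>m pmat2 t"
    and eH: "H * pmat2 s * mat_adjoint H = cH \<cdot>\<^sub>m pmat2 t" and cH: "cH \<noteq> 0"
  shows "(mat_adjoint H * G) * pmat2 s = (cG / cH) \<cdot>\<^sub>m (pmat2 s * (mat_adjoint H * G))"
proof -
  note g = unitary_matD[OF uG] and h = unitary_matD[OF uH]
  have "(mat_adjoint H * G) * pmat2 s = mat_adjoint H * (G * pmat2 s * mat_adjoint G) * G"
    using g h by (simp add: assoc_mult_mat[of _ 4 4 _ 4 _ 4] unitary_cancel_left[OF uG, of _ 4])
  also have "\<dots> = cG \<cdot>\<^sub>m (mat_adjoint H * pmat2 t * G)"
    unfolding eG using g h by (simp add: mult_smult_assoc_mat[of _ 4 4 _ 4] mult_smult_distrib[of _ 4 4 _ 4])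
  also have "mat_adjoint H * pmat2 t = (1 / cH) \<cdot>\<^sub>m (mat_adjoint H * (cH \<cdot>\<^sub>m pmat2 t))"
    using h cH by (simp add: mult_smult_distrib[of _ 4 4 _ 4])
  also have "mat_adjoint H * (cH \<cdot>\<^sub>m pmat2 t) = pmat2 s * mat_adjoint H"
    unfolding eH[symmetric] using h by (simp add: assoc_mult_mat[of _ 4 4 _ 4 _ 4] unitary_cancel_left[OF uH, of _ 4])
  finally show ?thesis
    using g h cH by (simp add: mult_smult_assoc_mat[of _ 4 4 _ 4] assoc_mult_mat[of _ 4 4 _ 4 _ 4])
qed

lemma clifford2_eq_mult_pauli:
  assumes G: "clifford2 G" and H: "clifford2 H"
    and agree: "\<And>\<sigma>. \<sigma> \<in> local_paulis \<Longrightarrow> gate_img H \<sigma> = gate_img G \<sigma>"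
  shows "\<exists>lam p q. G = H * (lam \<cdot>\<^sub>m pmat2 (p,q)) \<and> lam * cnj lam = 1"
proof -
  note uG = clifford2_unitary[OF G] and uH = clifford2_unitary[OF H]
  define W where "W = mat_adjoint H * G"
  have "\<exists>e. W * pmat2 \<sigma> = e \<cdot>\<^sub>m (pmat2 \<sigma> * W)" if \<sigma>: "\<sigma> \<in> local_paulis" for \<sigma>
  proof -
    obtain cG where cG: "G * pmat2 \<sigma> * mat_adjoint G = cG \<cdot>\<^sub>m pmat2 (gate_img G \<sigma>)"
      using clifford2_conj_pmat2[OF G] by blast
    obtain cH where cH: "cH \<noteq> 0" "H * pmat2 \<sigma> * mat_adjoint H = cH \<cdot>\<^sub>m pmat2 (gate_img G \<sigma>)"
      using clifford2_conj_pmat2[OF H, of \<sigma>] agree[OF \<sigma>] by auto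
    show ?thesis
      unfolding W_def using same_conj_imp_sign_commute[OF uG uH cG cH(2) cH(1)] by blast
  qed
  moreover have "unitary_mat 4 W"
    unfolding W_def by (rule unitary_mat_mult[OF unitary_mat_adjoint[OF uH] uG])
  ultimately obtain lam p q where "W = lam \<cdot>\<^sub>m pmat2 (p,q)" "lam * cnj lam = 1"
    using sign_commutes_local_paulis_imp_pauli by blast
  moreover have "G = H * W"
    unfolding W_def using unitary_matD[OF uG] by (simp add: unitary_cancel_left'[OF uH, of G 4])
  ultimately show ?thesis by blast
qed

lemma right_local_preimage:
  assumes T: "clifford2 T" and G: "clifford2 G" and uv: "u \<noteq> v" "u \<noteq> PI" "v \<noteq> PI"
    and hu: "gate_img T (u,PI) = gate_img G (PX,PI)" and hv: "gate_img T (v,PI) = gate_img G (PZ,PI)"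
    and z: "z = (PI,PX) \<or> z = (PI,PZ)"
  shows "\<exists>w. gate_img T (PI,w) = gate_img G z"
proof -
  have "surj (gate_img T)"
    using gate_img_inj[OF T] by (intro finite_UNIV_inj_surj) (auto simp: inj_def)
  then obtain y where y: "gate_img T y = gate_img G z"
    by (metis surjD)
  have "pcommute2 y (u,PI) = pcommute2 z (PX,PI)" "pcommute2 y (v,PI) = pcommute2 z (PZ,PI)"
    using pcommute2_gate_img[OF T, of y] pcommute2_gate_img[OF G, of z] y hu hv by metis+
  then have "pcommute (fst y) u" "pcommute (fst y) v"
    using z unfolding pcommute2_def pcommute_def by auto
  then have "fst y = PI"
    using uv unfolding pcommute_def by auto
  then show ?thesis
    using y by (metis prod.collapse)
qed

lemma dressed_class_if_left_images_agree:
  assumes G: "clifford2 G" and M: "clifford2 M" and a1: "clifford1 a1" and a2: "clifford1 a2"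
    and uv: "u \<noteq> v" "u \<noteq> PI" "v \<noteq> PI"
    and hu: "gate_img (kron2 a1 a2 * M) (u,PI) = gate_img G (PX,PI)"
    and hv: "gate_img (kron2 a1 a2 * M) (v,PI) = gate_img G (PZ,PI)"
  shows "dressed_class M G"
proof -
  define T where "T = kron2 a1 a2 * M"
  have T: "clifford2 T"
    unfolding T_def by (rule clifford2_mult(1)[OF clifford2_kron2(1)[OF a1 a2] M])
  obtain w1 w2 where w: "gate_img T (PI,w1) = gate_img G (PI,PX)" "gate_img T (PI,w2) = gate_img G (PI,PZ)"
    using right_local_preimage[OF T G uv hu[folded T_def] hv[folded T_def]] by metis
  have "w1 \<noteq> w2" "w1 \<noteq> PI" "w2 \<noteq> PI"
    using w gate_img_inj[OF G] gate_img_PI[OF T] gate_img_PI[OF G] by (metis pauli.distinct prod.inject)+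
  then obtain a4 where a4: "clifford1 a4" "gate1_img a4 PX = w1" "gate1_img a4 PZ = w2"
    using clifford1_exists_XZ by blast
  obtain a3 where a3: "clifford1 a3" "gate1_img a3 PX = u" "gate1_img a3 PZ = v"
    using clifford1_exists_XZ[OF uv] by blast
  define H where "H = T * kron2 a3 a4"
  have H: "clifford2 H"
    unfolding H_def by (rule clifford2_mult(1)[OF T clifford2_kron2(1)[OF a3(1) a4(1)]])
  have "gate_img H \<sigma> = gate_img T (gate1_img a3 (fst \<sigma>), gate1_img a4 (snd \<sigma>))" for \<sigma>
    unfolding H_def by (simp add: clifford2_mult(2)[OF T clifford2_kron2(1)[OF a3(1) a4(1)]] clifford2_kron2(2)[OF a3(1) a4(1)])
  then have "gate_img H \<sigma> = gate_img G \<sigma>" if "\<sigma> \<in> local_paulis" for \<sigma>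
    using that a3 a4 gate1_img_PI[OF a3(1)] gate1_img_PI[OF a4(1)] hu hv w
    unfolding T_def local_paulis_def by auto
  then obtain lam p q where lam: "G = H * (lam \<cdot>\<^sub>m pmat2 (p,q))" "lam * cnj lam = 1"
    using clifford2_eq_mult_pauli[OF G H] by blast
  have "G = T * (kron2 a3 a4 * (lam \<cdot>\<^sub>m kron2 (pmat p) (pmat q)))"
    unfolding lam(1) H_def pmat2_def
    using clifford1_carrier[OF a3(1)] clifford1_carrier[OF a4(1)] clifford2_carrier[OF T]
    by (simp add: assoc_mult_mat[of _ 4 4 _ 4 _ 4])
  also have "kron2 a3 a4 * (lam \<cdot>\<^sub>m kron2 (pmat p) (pmat q)) = kron2 (lam \<cdot>\<^sub>m (a3 * pmat p)) (a4 * pmat q)"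
    using clifford1_carrier[OF a3(1)] clifford1_carrier[OF a4(1)]
    by (simp add: mult_smult_distrib[of _ 4 4 _ 4] kron2_mult kron2_smult_left)
  finally have "G = kron2 a1 a2 * M * kron2 (lam \<cdot>\<^sub>m (a3 * pmat p)) (a4 * pmat q)"
    unfolding T_def .
  moreover have "clifford1 (lam \<cdot>\<^sub>m (a3 * pmat p))" "clifford1 (a4 * pmat q)"
    using clifford1_smult[OF lam(2) clifford1_mult[OF a3(1) clifford1_pmat]] clifford1_mult[OF a4(1) clifford1_pmat]
    by blast+
  ultimately show ?thesis
    unfolding dressed_class_def using a1 a2 by blast
qed

section \<open>Gates that transmit a two-dimensional space of Paulis\<close>

definition transfer :: "complex mat \<Rightarrow> pauli \<Rightarrow> pauli" where
  "transfer G a = snd (gate_img G (a, PI))"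

text \<open>The map \<^term>\<open>transfer G\<close> is $\mathbb{F}_2$-linear; this predicate says that its rank is
  at most one.\<close>

definition transfer_rank_le_one :: "complex mat \<Rightarrow> bool" where
  "transfer_rank_le_one G \<longleftrightarrow>
     (\<forall>a1 a2. transfer G a1 \<noteq> PI \<longrightarrow> transfer G a2 \<noteq> PI \<longrightarrow> transfer G a1 = transfer G a2)"

lemma transfer_PX_PZ_independent:
  assumes G: "clifford2 G" and "\<not> transfer_rank_le_one G"
  shows "transfer G PX \<noteq> PI" "transfer G PZ \<noteq> PI" "transfer G PX \<noteq> transfer G PZ"
proof -
  have hom: "transfer G (pmul a b) = pmul (transfer G a) (transfer G b)" for a b
    using gate_img_pmul[OF G, of a b PI PI] unfolding transfer_def by simp
  have "transfer G PI = PI" "transfer G PY = pmul (transfer G PX) (transfer G PZ)"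
    using hom[of PI PI] hom[of PX PZ] by simp_all
  moreover obtain a1 a2 where "transfer G a1 \<noteq> PI" "transfer G a2 \<noteq> PI" "transfer G a1 \<noteq> transfer G a2"
    using assms(2) unfolding transfer_rank_le_one_def by blast
  ultimately show "transfer G PX \<noteq> PI" "transfer G PZ \<noteq> PI" "transfer G PX \<noteq> transfer G PZ"
    by (cases a1; cases a2; auto simp: pmul_eq_PI_iff pmul_eq_left_iff pmul_eq_right_iff)+
qed

lemma SWAP_class_if_left_images_on_right:
  assumes G: "clifford2 G"
    and X: "gate_img G (PX,PI) = (PI,Q1)" and Z: "gate_img G (PZ,PI) = (PI,Q2)"
    and Q: "Q1 \<noteq> Q2" "Q1 \<noteq> PI" "Q2 \<noteq> PI"
  shows "SWAP_class G"
proof -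
  obtain b2 where b2: "clifford1 b2" "gate1_img b2 PX = Q1" "gate1_img b2 PZ = Q2"
    using clifford1_exists_XZ[OF Q] by blast
  have "gate_img (kron2 (1\<^sub>m 2) b2 * SWAP) x = (gate1_img (1\<^sub>m 2) (snd x), gate1_img b2 (fst x))" for x
    by (simp add: clifford2_mult(2)[OF clifford2_kron2(1)[OF clifford1_one b2(1)] clifford2_SWAP(1)]
        clifford2_SWAP(2) clifford2_kron2(2)[OF clifford1_one b2(1)])
  then have "gate_img (kron2 (1\<^sub>m 2) b2 * SWAP) (PX,PI) = gate_img G (PX,PI)"
            "gate_img (kron2 (1\<^sub>m 2) b2 * SWAP) (PZ,PI) = gate_img G (PZ,PI)"
    using X Z b2 gate1_img_PI[OF clifford1_one] by simp_all
  from dressed_class_if_left_images_agree[OF G clifford2_SWAP(1) clifford1_one b2(1) _ _ _ this]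
  show ?thesis
    unfolding SWAP_class_def by simp
qed

lemma FSWAP_class_if_left_images_reach_right:
  assumes G: "clifford2 G"
    and X: "gate_img G (PX,PI) = (P1,Q1)" and Z: "gate_img G (PZ,PI) = (P2,Q2)"
    and Q: "Q1 \<noteq> Q2" "Q1 \<noteq> PI" "Q2 \<noteq> PI"
    and P: "P1 \<noteq> PI \<or> P2 \<noteq> PI" "pcommute P1 P2"
  shows "FSWAP_class G"
proof -
  define R where "R = (if P1 = PI then P2 else P1)"
  define u where "u = (if P1 = PI then PZ else PX)"
  define v where "v = (if P1 = PI then PX else if P2 = PI then PZ else PY)"
  have uv: "u \<noteq> v" "u \<noteq> PI" "v \<noteq> PI"
    unfolding u_def v_def by auto
  have "R \<noteq> PI" "(if R = PX then PZ else PX) \<noteq> R" "(if R = PX then PZ else PX) \<noteq> PI"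
    using P(1) unfolding R_def by auto
  then obtain b1 where b1: "clifford1 b1" "gate1_img b1 PZ = R"
    using clifford1_exists_XZ by metis
  obtain b2 where b2: "clifford1 b2" "gate1_img b2 u = Q1" "gate1_img b2 v = Q2"
    using clifford1_exists[OF uv Q] by blast
  have img: "gate_img (kron2 b1 b2 * (CZ * SWAP)) x
           = (gate1_img b1 (fst (cz_img (snd x, fst x))), gate1_img b2 (snd (cz_img (snd x, fst x))))" for x
    by (simp add: clifford2_mult(2)[OF clifford2_kron2(1)[OF b1(1) b2(1)] clifford2_FSWAP(1)]
        clifford2_FSWAP(2) clifford2_kron2(2)[OF b1(1) b2(1)])
  have "gate1_img b1 (if has_x u then PZ else PI) = P1" "gate1_img b1 (if has_x v then PZ else PI) = P2"
    using P b1 gate1_img_PI[OF b1(1)] unfolding u_def v_def R_def has_x_def pcommute_def by auto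
  then have "gate_img (kron2 b1 b2 * (CZ * SWAP)) (u,PI) = gate_img G (PX,PI)"
            "gate_img (kron2 b1 b2 * (CZ * SWAP)) (v,PI) = gate_img G (PZ,PI)"
    unfolding img X Z using b2 by (simp_all add: cz_img_def has_x_def)
  from dressed_class_if_left_images_agree[OF G clifford2_FSWAP(1) b1(1) b2(1) uv this]
  show ?thesis
    unfolding FSWAP_class_def by simp
qed

theorem SWAP_or_FSWAP_class_if_transfer_rank_two:
  assumes G: "clifford2 G" and "\<not> transfer_rank_le_one G"
  shows "SWAP_class G \<or> FSWAP_class G"
proof -
  obtain P1 Q1 P2 Q2 where X: "gate_img G (PX,PI) = (P1,Q1)" and Z: "gate_img G (PZ,PI) = (P2,Q2)"
    by (metis prod.collapse)
  have Q: "Q1 \<noteq> Q2" "Q1 \<noteq> PI" "Q2 \<noteq> PI"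
    using transfer_PX_PZ_independent[OF assms] X Z unfolding transfer_def by auto
  have "pcommute2 (P1,Q1) (P2,Q2) = pcommute2 (PX,PI) (PZ,PI)"
    using pcommute2_gate_img[OF G, of "(PX,PI)" "(PZ,PI)"] X Z by simp
  then have "pcommute P1 P2"
    using Q unfolding pcommute2_def pcommute_def by auto
  then show ?thesis
    using SWAP_class_if_left_images_on_right[OF G _ _ Q] FSWAP_class_if_left_images_reach_right[OF G X Z Q]
      X Z by blast
qed

definition pstring_mul :: "(int \<Rightarrow> pauli) \<Rightarrow> (int \<Rightarrow> pauli) \<Rightarrow> int \<Rightarrow> pauli" where
  "pstring_mul P Q = (\<lambda>j. pmul (P j) (Q j))"

definition supported_le :: "int \<Rightarrow> (int \<Rightarrow> pauli) \<Rightarrow> bool" where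
  "supported_le i P \<longleftrightarrow> (\<forall>j>i. P j = PI)"

lemma pstring_mul_PI[simp]: "pstring_mul P (\<lambda>_. PI) = P"
  by (simp add: pstring_mul_def)

lemma supported_le_pstring_mul: "supported_le c x \<Longrightarrow> supported_le c z \<Longrightarrow> supported_le c (pstring_mul x z)"
  by (simp add: supported_le_def pstring_mul_def)

lemma supported_le_mono: "supported_le i x \<Longrightarrow> i \<le> c \<Longrightarrow> supported_le c x"
  by (simp add: supported_le_def)

context
  fixes C :: "int \<Rightarrow> complex mat"
  assumes clifford: "\<forall>j. clifford2 (C j)"
begin

lemma layer_pstring_mul: "layer C par (pstring_mul P Q) = pstring_mul (layer C par P) (layer C par Q)"
  unfolding layer_def pstring_mul_def using gate_img_pmul clifford by (auto simp: fun_eq_iff)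

lemma U_act_pow_pstring_mul:
  "(U_act C ^^ t) (pstring_mul P Q) = pstring_mul ((U_act C ^^ t) P) ((U_act C ^^ t) Q)"
  by (induction t) (simp_all add: U_act_def layer_pstring_mul)

lemma layer_PI: "layer C par (\<lambda>_. PI) = (\<lambda>_. PI)"
  unfolding layer_def using gate_img_PI clifford by (auto simp: fun_eq_iff)

lemma U_act_pow_PI: "(U_act C ^^ t) (\<lambda>_. PI) = (\<lambda>_. PI)"
  by (induction t) (simp_all add: U_act_def layer_PI)

lemma layer_apply:
  "(j - par) mod 2 = 0 \<Longrightarrow> layer C par P j = fst (gate_img (C j) (P j, P (j + 1)))"
  "(j - par) mod 2 \<noteq> 0 \<Longrightarrow> layer C par P j = snd (gate_img (C (j - 1)) (P (j - 1), P j))"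
  by (simp_all add: layer_def)

lemma layer_right_of_support:
  assumes x: "supported_le i x"
  shows "i + 1 < j \<Longrightarrow> layer C par x j = PI"
    and "(i - par) mod 2 \<noteq> 0 \<Longrightarrow> supported_le i (layer C par x)"
    and "(i - par) mod 2 = 0 \<Longrightarrow> layer C par x (i + 1) = transfer (C i) (x i)"
proof -
  note x = x[unfolded supported_le_def, rule_format]
  note gPI = gate_img_PI[OF clifford[rule_format]]
  show far: "layer C par x j = PI" if "i + 1 < j" for j
    using that x[of j] x[of "j + 1"] x[of "j - 1"] gPI by (simp add: layer_def)
  show "supported_le i (layer C par x)" if "(i - par) mod 2 \<noteq> 0"
  proof -
    have "(i + 1 - par) mod 2 = 0"
      using that by presburger
    then have "layer C par x (i + 1) = PI"
      using x[of "i + 1"] x[of "i + 2"] gPI by (simp add: layer_def add.assoc)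
    moreover have "j = i + 1 \<or> i + 1 < j" if "i < j" for j
      using that by linarith
    ultimately show ?thesis
      using far unfolding supported_le_def by fastforce
  qed
  show "(i - par) mod 2 = 0 \<Longrightarrow> layer C par x (i + 1) = transfer (C i) (x i)"
    using x[of "i + 1"] by (simp add: layer_def transfer_def) presburger
qed

text \<open>The Pauli on site $i$ at the moment the gate $C_{i,i+1}$ acts: for odd $i$ the even layer
  has already acted on it.\<close>

definition gate_input :: "int \<Rightarrow> (int \<Rightarrow> pauli) \<Rightarrow> pauli" where
  "gate_input i x = (if i mod 2 = 0 then x i else snd (gate_img (C (i - 1)) (x (i - 1), x i)))"

definition right_tail :: "int \<Rightarrow> pauli \<Rightarrow> int \<Rightarrow> pauli" where
  "right_tail i b j = (if i mod 2 = 0 then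
      (if j = i + 1 then fst (gate_img (C (i + 1)) (b, PI)) else if j = i + 2 then transfer (C (i + 1)) b else PI)
    else (if j = i + 1 then b else PI))"

lemma U_act_right_of_support:
  assumes x: "supported_le i x" and j: "i < j"
  shows "U_act C x j = right_tail i (transfer (C i) (gate_input i x)) j"
proof (cases "i mod 2 = 0")
  case True
  let ?E = "layer C 0 x"
  have E1: "?E (i + 1) = transfer (C i) (x i)"
    using layer_right_of_support(3)[OF x] True by simp
  have E: "supported_le (i + 1) ?E"
    using layer_right_of_support(1)[OF x] unfolding supported_le_def by simp
  have odd: "(i + 1 - 1) mod 2 = 0"
    using True by simp
  have "U_act C x (i + 1) = fst (gate_img (C (i + 1)) (?E (i + 1), PI))"
    using E odd layer_apply(1)[OF odd, of "?E"] unfolding U_act_def supported_le_def by (simp add: add.assoc)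
  moreover have "U_act C x (i + 2) = transfer (C (i + 1)) (?E (i + 1))"
    using layer_right_of_support(3)[OF E odd] unfolding U_act_def by (simp add: add.assoc)
  moreover have "U_act C x k = PI" if "i + 2 < k" for k
    using layer_right_of_support(1)[OF E] that unfolding U_act_def by simp
  ultimately show ?thesis
    using j True E1 unfolding right_tail_def gate_input_def
    by (smt (verit))
next
  case False
  let ?E = "layer C 0 x"
  have E: "supported_le i ?E"
    using layer_right_of_support(2)[OF x] False by simp
  have "(i - 1) mod 2 = 0"
    using False by presburger
  then have "U_act C x (i + 1) = transfer (C i) (?E i)"
    using layer_right_of_support(3)[OF E] unfolding U_act_def by simp
  moreover have "?E i = gate_input i x"
    using False unfolding gate_input_def by (simp add: layer_apply)
  moreover have "U_act C x k = PI" if "i + 1 < k" for k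
    using layer_right_of_support(1)[OF E] that unfolding U_act_def by simp
  ultimately show ?thesis
    using j False unfolding right_tail_def by (smt (verit))
qed

end

section \<open>Splitting a wall at a gate of transfer rank at most one\<close>

context
  fixes C :: "int \<Rightarrow> complex mat"
  assumes clifford: "\<forall>j. clifford2 (C j)"
begin

lemma right_tail_PI: "right_tail C i PI j = PI"
  using gate_img_PI clifford by (simp add: right_tail_def transfer_def)

lemma leaking_transfer_nontrivial:
  assumes "supported_le i x" "\<not> supported_le i (U_act C x)"
  shows "transfer (C i) (gate_input C i x) \<noteq> PI"
proof
  assume "transfer (C i) (gate_input C i x) = PI"
  then have "supported_le i (U_act C x)"
    using U_act_right_of_support[OF clifford assms(1)] right_tail_PI unfolding supported_le_def by simp
  with assms(2) show False ..
qed

lemma U_act_right_of_support_agree: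
  assumes rank: "transfer_rank_le_one (C i)"
    and x: "supported_le i x" "\<not> supported_le i (U_act C x)"
    and w: "supported_le i w" "\<not> supported_le i (U_act C w)"
  shows "\<forall>j>i. U_act C x j = U_act C w j"
proof -
  have "transfer (C i) (gate_input C i x) = transfer (C i) (gate_input C i w)"
    using rank leaking_transfer_nontrivial[OF x] leaking_transfer_nontrivial[OF w]
    unfolding transfer_rank_le_one_def by blast
  then show ?thesis
    using U_act_right_of_support[OF clifford x(1)] U_act_right_of_support[OF clifford w(1)] by simp
qed

definition confined :: "int \<Rightarrow> (int \<Rightarrow> pauli) \<Rightarrow> bool" where
  "confined c z \<longleftrightarrow> (\<forall>s. supported_le c ((U_act C ^^ s) z))"

lemma confined_U_act: "confined c z \<Longrightarrow> confined c (U_act C z)"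
  unfolding confined_def by (metis comp_apply funpow_Suc_right)

lemma confined_pstring_mul: "confined c y \<Longrightarrow> confined c z \<Longrightarrow> confined c (pstring_mul y z)"
  unfolding confined_def by (simp add: U_act_pow_pstring_mul[OF clifford] supported_le_pstring_mul)

lemma confined_PI: "confined c (\<lambda>_. PI)"
  unfolding confined_def by (simp add: U_act_pow_PI[OF clifford] supported_le_def)

text \<open>Take the first time a string from the left of $a$ leaks across $i$; $w$ is that string one
  step earlier.\<close>

lemma leaking_string:
  assumes wall: "left_wall C a c" and not_wall: "\<not> left_wall C a i" and "a \<le> i"
  shows "\<exists>w. supported_le i w \<and> \<not> supported_le i (U_act C w) \<and> confined c (U_act C w)"
proof -
  let ?U = "U_act C"
  obtain P t where P: "finite {j. P j \<noteq> PI}" "\<forall>j. P j \<noteq> PI \<longrightarrow> j \<le> a"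
    and t: "t \<ge> 1" "\<not> supported_le i ((?U ^^ t) P)"
    using not_wall unfolding left_wall_def supported_le_def by blast
  have P_wall: "supported_le c ((?U ^^ s) P)" if "s \<ge> 1" for s
    using wall P that unfolding left_wall_def supported_le_def by blast
  define t0 where "t0 = (LEAST s. s \<ge> 1 \<and> \<not> supported_le i ((?U ^^ s) P))"
  have t0: "t0 \<ge> 1" "\<not> supported_le i ((?U ^^ t0) P)"
    using LeastI[of "\<lambda>s. s \<ge> 1 \<and> \<not> supported_le i ((?U ^^ s) P)" t] t unfolding t0_def by auto
  define w where "w = (?U ^^ (t0 - 1)) P"
  have "(?U ^^ t0) P = (?U ^^ Suc (t0 - 1)) P"
    using t0(1) by simp
  then have Uw: "?U w = (?U ^^ t0) P"
    unfolding w_def by simp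
  have "supported_le i w"
  proof (cases "t0 = 1")
    case True
    then show ?thesis
      using P(2) \<open>a \<le> i\<close> unfolding w_def supported_le_def by force
  next
    case False
    then show ?thesis
      using not_less_Least[of "t0 - 1" "\<lambda>s. s \<ge> 1 \<and> \<not> supported_le i ((?U ^^ s) P)"] t0(1)
      unfolding w_def t0_def[symmetric] by auto
  qed
  moreover have "confined c (?U w)"
    unfolding confined_def Uw
  proof
    fix s
    have "(?U ^^ s) ((?U ^^ t0) P) = (?U ^^ (s + t0)) P"
      by (simp add: funpow_add)
    then show "supported_le c ((?U ^^ s) ((?U ^^ t0) P))"
      using P_wall[of "s + t0"] t0(1) by simp
  qed
  ultimately show ?thesis
    using t0(2) Uw by auto
qed

text \<open>A leaking factor $x$ is traded for $x w$, which no longer leaks because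
  $x$ and $w$ transfer the same Pauli across the bond, times the confined $U w$.\<close>

lemma U_act_pow_decomposition:
  assumes rank: "transfer_rank_le_one (C i)"
    and w: "supported_le i w" "\<not> supported_le i (U_act C w)" "confined c (U_act C w)"
    and Q: "supported_le i Q"
  shows "\<exists>x z. supported_le i x \<and> confined c z \<and> (U_act C ^^ s) Q = pstring_mul x z"
proof (induction s)
  case 0
  show ?case
    using Q confined_PI by (metis funpow_0 pstring_mul_PI)
next
  case (Suc s)
  then obtain x z where xz: "supported_le i x" "confined c z" "(U_act C ^^ s) Q = pstring_mul x z"
    by blast
  have Um: "(U_act C ^^ Suc s) Q = pstring_mul (U_act C x) (U_act C z)"
    using xz(3) U_act_pow_pstring_mul[OF clifford, of 1] by simp
  show ?case
  proof (cases "supported_le i (U_act C x)")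
    case True
    then show ?thesis
      using Um confined_U_act[OF xz(2)] by blast
  next
    case False
    have "supported_le i (pstring_mul (U_act C x) (U_act C w))"
      using U_act_right_of_support_agree[OF rank xz(1) False w(1,2)]
      by (simp add: supported_le_def pstring_mul_def)
    moreover have "confined c (pstring_mul (U_act C w) (U_act C z))"
      by (rule confined_pstring_mul[OF w(3) confined_U_act[OF xz(2)]])
    moreover have "(U_act C ^^ Suc s) Q
        = pstring_mul (pstring_mul (U_act C x) (U_act C w)) (pstring_mul (U_act C w) (U_act C z))"
      using Um by (simp add: pstring_mul_def pmul_assoc pmul_cancel_left)
    ultimately show ?thesis
      by blast
  qed
qed

lemma left_wall_split:
  assumes rank: "transfer_rank_le_one (C i)"
    and wall: "left_wall C a c" and "a \<le> i" "i \<le> c"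
  shows "left_wall C a i \<or> left_wall C i c"
proof (cases "left_wall C a i")
  case False
  then obtain w where w: "supported_le i w" "\<not> supported_le i (U_act C w)" "confined c (U_act C w)"
    using leaking_string[OF wall _ \<open>a \<le> i\<close>] by blast
  have "left_wall C i c"
    unfolding left_wall_def
  proof (intro allI impI)
    fix Q :: "int \<Rightarrow> pauli" and s :: nat and j :: int
    assume "finite {j. Q j \<noteq> PI}" "\<forall>j. Q j \<noteq> PI \<longrightarrow> j \<le> i" "1 \<le> s" "c < j"
    then have "supported_le i Q"
      unfolding supported_le_def by (meson not_le)
    then obtain x z where "supported_le i x" "confined c z" "(U_act C ^^ s) Q = pstring_mul x z"
      using U_act_pow_decomposition[OF rank w] by blast
    moreover have "supported_le c z"
      using \<open>confined c z\<close> unfolding confined_def by (metis funpow_0)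
    ultimately have "supported_le c ((U_act C ^^ s) Q)"
      using supported_le_mono[OF _ \<open>i \<le> c\<close>] supported_le_pstring_mul by simp
    then show "(U_act C ^^ s) Q j = PI"
      using \<open>c < j\<close> unfolding supported_le_def by simp
  qed
  then show ?thesis ..
qed simp

end

theorem lemma8:
  fixes C :: "int \<Rightarrow> complex mat" and k :: nat and a :: int
  assumes "\<forall>i. clifford2 (C i)"
    and "\<forall>i. \<not> product_class (C i)"
    and "k \<ge> 1"
    and "irreducible_left_wall C k a"
  shows "\<forall>i. a + 1 \<le> i \<and> i \<le> a + int k - 1 \<longrightarrow> SWAP_class (C i) \<or> FSWAP_class (C i)"
proof (intro allI impI)
  fix i assume i: "a + 1 \<le> i \<and> i \<le> a + int k - 1"
  have "\<not> left_wall C a i" "\<not> left_wall C i (a + int k)"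
    using assms(4) i unfolding irreducible_left_wall_def by auto
  moreover have "left_wall C a (a + int k)"
    using assms(4) unfolding irreducible_left_wall_def by blast
  ultimately have "\<not> transfer_rank_le_one (C i)"
    using left_wall_split[OF assms(1)] i by fastforce
  then show "SWAP_class (C i) \<or> FSWAP_class (C i)"
    using SWAP_or_FSWAP_class_if_transfer_rank_two assms(1) by blast
qed
end
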